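(* Let $X$ be a real Banach space whose dual $X^*$ is isometrically isomorphic to $L_1(\mu)$ for some measure $\mu$. If $X$ is octahedral, then for every $x_1,\dots,x_k\in S_X$ and every $\varepsilon>0$ there exists a sequence $(x_n^{**})_{n\in\mathbb N}\subseteq S_{X^{**}}$ such that (1) $(x_n^{**})$ is isometrically equivalent to the unit vector basis of $c_0$, i.e. $\|\sum_{j=1}^n\lambda_jx_j^{**}\|=\max_j|\lambda_j|$ for all scalars; and (2) $\|x_i+v\|>1-\varepsilon+\|v\|$ for every $1\le i\le k$ and every $v\in\overline{\operatorname{span}}\{x_n^{**}:n\in\mathbb N\}$ (norm computed in $X^{**}$, with $X$ canonically embedded).
   Context: A Banach space $W$ is octahedral if for every finite dimensional subspace $E$ of $W$ and every $\varepsilon>0$ there exists $y\in W$, $\|y\|=1$, with $\|x+\lambda y\|\ge(1-\varepsilon)(\|x\|+|\lambda|)$ for all $x\in E$, $\lambda\in\mathbb R$. $S_W$ is the unit sphere of $W$. *)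

theory Defs
  imports "HOL-Analysis.Analysis"
begin

text \<open>Octahedrality of the normed space whose carrier is the type 'a.
  A finite-dimensional subspace is written as the span of a finite set.\<close>
definition octahedral :: "'a::real_normed_vector itself \<Rightarrow> bool" where
  "octahedral _ \<longleftrightarrow>
     (\<forall>F::'a set. finite F \<longrightarrow> (\<forall>\<epsilon>>0. \<exists>y. norm y = 1 \<and>
        (\<forall>x\<in>span F. \<forall>t::real. norm (x + t *\<^sub>R y) \<ge> (1 - \<epsilon>) * (norm x + \<bar>t\<bar>))))"

text \<open>The dual space X* = ('a \<Rightarrow>L real) is isometrically isomorphic to L1(M):
  there is a map T assigning to each functional an integrable representative,
  linear modulo null sets, norm-preserving, and onto L1(M) (modulo null sets).\<close>
definition dual_isometric_L1 :: "'a::real_normed_vector itself \<Rightarrow> 'm measure \<Rightarrow> bool" where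
  "dual_isometric_L1 _ M \<longleftrightarrow>
     (\<exists>T::('a \<Rightarrow>\<^sub>L real) \<Rightarrow> ('m \<Rightarrow> real).
        (\<forall>f g a b. AE x in M. T (a *\<^sub>R f + b *\<^sub>R g) x = a * T f x + b * T g x) \<and>
        (\<forall>f. integrable M (T f) \<and> norm f = (\<integral>x. \<bar>T f x\<bar> \<partial>M)) \<and>
        (\<forall>g. integrable M g \<longrightarrow> (\<exists>f. AE x in M. T f x = g x)))"

definition canon :: "'a::real_normed_vector \<Rightarrow> (('a \<Rightarrow>\<^sub>L real) \<Rightarrow>\<^sub>L real)" where
  "canon x = Blinfun (\<lambda>f. blinfun_apply f x)"

end

theory Submission
  imports Defs
begin

(* Octahedrality yields unit vectors y_0, y_1, ... such that each y_n is almost l1-orthogonal to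
   the given x_i and to the earlier y_j. A norming functional of x_i - y_0 - ... - y_(n-1) + y_n is
   then, up to small errors, 1 on x_i, -1 on every y_j with j < n and 1 on y_n. In X* = L1(mu) such
   a functional is a density h, and each y_j acts on densities as a signed measure whose Hahn
   decomposition P_j splits the measure space into the parts where y_j is positive and negative.
   The positive part of h therefore lives essentially on D_n+ = P_n - (P_0 u ... u P_(n-1)) and its
   negative part on D_n- = P_n' - (P_0' u ... u P_(n-1)') (complements). For n >= 1 these sets are
   pairwise disjoint, so the sign functions 1_(D_n+) - 1_(D_n-) are an isometric c0-basis in
   L_infinity, a subspace of X**, and the restricted normalized densities are biorthogonal
   functionals to them that almost norm x_i, which gives the estimate (2). *)

section \<open>Norming functionals\<close>

text \<open>Graphs of linear functionals on subspaces, dominated by the norm and taking the value norm w at w.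
  Zorn's lemma yields a maximal one, and maximal ones are defined everywhere.\<close>

definition dominated_graphs :: "'a::real_normed_vector \<Rightarrow> ('a \<times> real) set set" where
  "dominated_graphs w = {G. (w, norm w) \<in> G \<and> single_valued G \<and>
     (\<forall>v r v' r' a b. (v, r) \<in> G \<longrightarrow> (v', r') \<in> G \<longrightarrow> (a *\<^sub>R v + b *\<^sub>R v', a * r + b * r') \<in> G) \<and>
     (\<forall>v r. (v, r) \<in> G \<longrightarrow> r \<le> norm v)}"

lemma dominated_graphs_lincomb:
  assumes "G \<in> dominated_graphs w" "(v, r) \<in> G" "(v', r') \<in> G"
  shows "(a *\<^sub>R v + b *\<^sub>R v', a * r + b * r') \<in> G"
  using assms unfolding dominated_graphs_def by blast

lemma dominated_graphs_scaled:
  assumes G: "G \<in> dominated_graphs w" and "(v, r) \<in> G"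
  shows "(a *\<^sub>R v, a * r) \<in> G"
proof -
  have "(w, norm w) \<in> G"
    using G unfolding dominated_graphs_def by blast
  then have "(0, 0) \<in> G"
    using dominated_graphs_lincomb[OF G, of w _ w _ 0 0] by simp
  then show ?thesis
    using dominated_graphs_lincomb[OF G \<open>(v, r) \<in> G\<close>, of 0 0 a 0] by simp
qed

lemma line_in_dominated_graphs: "{(t *\<^sub>R w, t * norm w) | t. True} \<in> dominated_graphs w"
proof -
  let ?L = "{(t *\<^sub>R w, t * norm w) | t. True}"
  have "single_valued ?L"
    by (auto simp: single_valued_def)
  moreover have "(a *\<^sub>R v + b *\<^sub>R v', a * r + b * r') \<in> ?L" if mem: "(v, r) \<in> ?L" "(v', r') \<in> ?L"
    for v r v' r' a b
  proof -
    obtain t t' where "v = t *\<^sub>R w" "r = t * norm w" "v' = t' *\<^sub>R w" "r' = t' * norm w"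
      using mem by blast
    then show ?thesis
      by (intro CollectI exI[of _ "a * t + b * t'"]) (auto simp: algebra_simps)
  qed
  moreover have "t * norm w \<le> norm (t *\<^sub>R w)" for t
    by (simp add: mult_right_mono)
  moreover have "(w, norm w) \<in> ?L"
    by (auto intro!: exI[of _ 1])
  ultimately show ?thesis
    unfolding dominated_graphs_def by blast
qed

lemma Union_chain_in_dominated_graphs:
  assumes C: "C \<in> chains (dominated_graphs w)" and "C \<noteq> {}"
  shows "\<Union>C \<in> dominated_graphs w"
proof -
  have sub: "C \<subseteq> dominated_graphs w"
    using C by (simp add: chains_def)
  have common: "\<exists>G\<in>C. p \<in> G \<and> q \<in> G" if pq: "p \<in> \<Union>C" "q \<in> \<Union>C" for p q
  proof -
    obtain G H where "G \<in> C" "H \<in> C" "p \<in> G" "q \<in> H"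
      using pq by blast
    then show ?thesis
      using C unfolding chains_def chain_subset_def by blast
  qed
  show ?thesis
    unfolding dominated_graphs_def
  proof (intro CollectI conjI allI impI)
    show "(w, norm w) \<in> \<Union>C"
      using sub \<open>C \<noteq> {}\<close> unfolding dominated_graphs_def by auto
    show "single_valued (\<Union>C)"
    proof (rule single_valuedI)
      fix v r r' assume "(v, r) \<in> \<Union>C" "(v, r') \<in> \<Union>C"
      then obtain G where "G \<in> C" "(v, r) \<in> G" "(v, r') \<in> G"
        using common by blast
      with sub show "r = r'"
        unfolding dominated_graphs_def single_valued_def by blast
    qed
  next
    fix v r v' r' a b assume "(v, r) \<in> \<Union>C" "(v', r') \<in> \<Union>C"
    then obtain G where "G \<in> C" "(v, r) \<in> G" "(v', r') \<in> G"
      using common by blast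
    with sub show "(a *\<^sub>R v + b *\<^sub>R v', a * r + b * r') \<in> \<Union>C"
      unfolding dominated_graphs_def by blast
  next
    fix v r assume "(v, r) \<in> \<Union>C"
    with sub show "r \<le> norm v"
      unfolding dominated_graphs_def by blast
  qed
qed

lemma dominated_graph_extension_value:
  assumes "G \<in> dominated_graphs w"
  obtains c where "\<And>v r. (v, r) \<in> G \<Longrightarrow> r - norm (v - z) \<le> c"
    and "\<And>v r. (v, r) \<in> G \<Longrightarrow> c \<le> norm (v + z) - r"
proof -
  have zero: "(0, 0) \<in> G"
    using assms dominated_graphs_scaled[OF assms, of w "norm w" 0] unfolding dominated_graphs_def by simp
  have gap: "r - norm (v - z) \<le> norm (v' + z) - r'" if "(v, r) \<in> G" "(v', r') \<in> G" for v r v' r'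
  proof -
    have "(v + v', r + r') \<in> G"
      using dominated_graphs_lincomb[OF assms that, of 1 1] by simp
    then have "r + r' \<le> norm (v + v')"
      using assms unfolding dominated_graphs_def by blast
    then show ?thesis
      using norm_triangle_ineq[of "v - z" "v' + z"] by simp
  qed
  define L where "L = {r - norm (v - z) | v r. (v, r) \<in> G}"
  have "L \<noteq> {}" "bdd_above L"
    using zero gap[OF _ zero] unfolding L_def bdd_above_def by auto
  show ?thesis
  proof (rule that[of "Sup L"])
    fix v r assume vr: "(v, r) \<in> G"
    show "r - norm (v - z) \<le> Sup L"
      by (rule cSup_upper) (use vr \<open>bdd_above L\<close> in \<open>auto simp: L_def\<close>)
    show "Sup L \<le> norm (v + z) - r"
      by (rule cSup_least[OF \<open>L \<noteq> {}\<close>]) (use gap vr in \<open>auto simp: L_def\<close>)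
  qed
qed

lemma dominated_graph_coordinate_unique:
  assumes G: "G \<in> dominated_graphs w" and z: "\<forall>r. (z, r) \<notin> G"
    and "(v1, r1) \<in> G" "(v2, r2) \<in> G" and eq: "v1 + t1 *\<^sub>R z = v2 + t2 *\<^sub>R z"
  shows "t1 = t2"
proof (rule ccontr)
  assume "t1 \<noteq> t2"
  have "v1 - v2 = (t2 - t1) *\<^sub>R z"
    using eq by (simp add: algebra_simps)
  then have "(1 / (t2 - t1)) *\<^sub>R (v1 - v2) = z"
    using \<open>t1 \<noteq> t2\<close> by simp
  then have z_eq: "z = (1 / (t2 - t1)) *\<^sub>R v1 + (- 1 / (t2 - t1)) *\<^sub>R v2"
    by (simp add: algebra_simps)
  have "(z, (1 / (t2 - t1)) * r1 + (- 1 / (t2 - t1)) * r2) \<in> G"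
    unfolding z_eq using G assms(3,4) by (rule dominated_graphs_lincomb)
  with z show False
    by blast
qed

lemma dominated_graph_extension_dominated:
  assumes G: "G \<in> dominated_graphs w" and "(v, r) \<in> G"
    and c_ge: "\<And>v r. (v, r) \<in> G \<Longrightarrow> r - norm (v - z) \<le> c"
    and c_le: "\<And>v r. (v, r) \<in> G \<Longrightarrow> c \<le> norm (v + z) - r"
  shows "r + t * c \<le> norm (v + t *\<^sub>R z)"
proof -
  consider "t = 0" | "t > 0" | "t < 0"
    by linarith
  then show ?thesis
  proof cases
    case 1
    then show ?thesis
      using G \<open>(v, r) \<in> G\<close> unfolding dominated_graphs_def by simp
  next
    case 2
    have "t * c \<le> t * (norm ((1 / t) *\<^sub>R v + z) - (1 / t) * r)"
      using c_le[OF dominated_graphs_scaled[OF assms(1,2), of "1 / t"]] 2 by (intro mult_left_mono) auto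
    also have "\<dots> = norm (t *\<^sub>R ((1 / t) *\<^sub>R v + z)) - r"
      using 2 by (simp add: right_diff_distrib)
    also have "t *\<^sub>R ((1 / t) *\<^sub>R v + z) = v + t *\<^sub>R z"
      using 2 by (simp add: scaleR_add_right)
    finally show ?thesis
      by simp
  next
    case 3
    have "- t * ((1 / - t) * r - norm ((1 / - t) *\<^sub>R v - z)) \<le> - t * c"
      using c_ge[OF dominated_graphs_scaled[OF assms(1,2), of "1 / - t"]] 3 by (intro mult_left_mono) auto
    moreover have "- t * ((1 / - t) * r - norm ((1 / - t) *\<^sub>R v - z)) = r - norm ((- t) *\<^sub>R ((1 / - t) *\<^sub>R v - z))"
      using 3 by (simp add: right_diff_distrib)
    moreover have "(- t) *\<^sub>R ((1 / - t) *\<^sub>R v - z) = v + t *\<^sub>R z"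
      using 3 by (simp add: scaleR_diff_right)
    ultimately show ?thesis
      by (simp add: algebra_simps)
  qed
qed

lemma dominated_graph_extend:
  assumes G: "G \<in> dominated_graphs w" and z: "\<forall>r. (z, r) \<notin> G"
  shows "\<exists>G'\<in>dominated_graphs w. G \<subset> G'"
proof -
  obtain c where c_ge: "\<And>v r. (v, r) \<in> G \<Longrightarrow> r - norm (v - z) \<le> c"
    and c_le: "\<And>v r. (v, r) \<in> G \<Longrightarrow> c \<le> norm (v + z) - r"
    using dominated_graph_extension_value[OF G] by blast
  define G' where "G' = {(v + t *\<^sub>R z, r + t * c) | v r t. (v, r) \<in> G}"
  have "G \<subseteq> G'"
    unfolding G'_def by force
  have "(0, 0) \<in> G"
    using dominated_graphs_scaled[OF G, of w "norm w" 0] G unfolding dominated_graphs_def by simp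
  then have "(z, c) \<in> G'"
    unfolding G'_def by (intro CollectI exI[of _ 0] exI[of _ 0] exI[of _ 1]) auto
  have "G' \<in> dominated_graphs w"
    unfolding dominated_graphs_def
  proof (intro CollectI conjI allI impI)
    show "(w, norm w) \<in> G'"
      using \<open>G \<subseteq> G'\<close> G unfolding dominated_graphs_def by auto
    show "single_valued G'"
    proof (rule single_valuedI)
      fix v r r' assume "(v, r) \<in> G'" "(v, r') \<in> G'"
      then obtain v1 r1 t1 v2 r2 t2 where e1: "v = v1 + t1 *\<^sub>R z" "r = r1 + t1 * c" "(v1, r1) \<in> G"
        and e2: "v = v2 + t2 *\<^sub>R z" "r' = r2 + t2 * c" "(v2, r2) \<in> G"
        unfolding G'_def by blast
      then have "t1 = t2"
        using dominated_graph_coordinate_unique[OF G z e1(3) e2(3)] by simp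
      with e1 e2 G show "r = r'"
        unfolding dominated_graphs_def single_valued_def by auto
    qed
  next
    fix v r v' r' a b assume "(v, r) \<in> G'" "(v', r') \<in> G'"
    then obtain v1 r1 t1 v2 r2 t2 where e1: "v = v1 + t1 *\<^sub>R z" "r = r1 + t1 * c" "(v1, r1) \<in> G"
      and e2: "v' = v2 + t2 *\<^sub>R z" "r' = r2 + t2 * c" "(v2, r2) \<in> G"
      unfolding G'_def by blast
    have "a *\<^sub>R v + b *\<^sub>R v' = (a *\<^sub>R v1 + b *\<^sub>R v2) + (a * t1 + b * t2) *\<^sub>R z"
      and "a * r + b * r' = (a * r1 + b * r2) + (a * t1 + b * t2) * c"
      using e1 e2 by (simp_all add: algebra_simps)
    with dominated_graphs_lincomb[OF G e1(3) e2(3)] show "(a *\<^sub>R v + b *\<^sub>R v', a * r + b * r') \<in> G'"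
      unfolding G'_def by blast
  next
    fix v r assume "(v, r) \<in> G'"
    then show "r \<le> norm v"
      unfolding G'_def using dominated_graph_extension_dominated[OF G _ c_ge c_le] by blast
  qed
  moreover have "G \<noteq> G'"
    using \<open>(z, c) \<in> G'\<close> z by blast
  ultimately show ?thesis
    using \<open>G \<subseteq> G'\<close> by blast
qed

lemma exists_linear_norming:
  fixes w :: "'a::real_normed_vector"
  shows "\<exists>f. linear f \<and> (\<forall>v. f v \<le> norm v) \<and> f w = norm w"
proof -
  have "\<exists>G\<in>dominated_graphs w. \<forall>X\<in>dominated_graphs w. G \<subseteq> X \<longrightarrow> X = G"
  proof (rule Zorn_Lemma2, intro ballI)
    fix C assume C: "C \<in> chains (dominated_graphs w)"
    show "\<exists>U\<in>dominated_graphs w. \<forall>X\<in>C. X \<subseteq> U"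
    proof (cases "C = {}")
      case True
      then show ?thesis
        using line_in_dominated_graphs by blast
    next
      case False
      then show ?thesis
        using Union_chain_in_dominated_graphs[OF C] by blast
    qed
  qed
  then obtain G where G: "G \<in> dominated_graphs w"
    and max: "\<And>X. X \<in> dominated_graphs w \<Longrightarrow> G \<subseteq> X \<Longrightarrow> X = G"
    by blast
  have total: "\<exists>r. (z, r) \<in> G" for z
    using dominated_graph_extend[OF G, of z] max by blast
  have fnc: "single_valued G"
    and lin: "\<And>v r v' r' a b. (v, r) \<in> G \<Longrightarrow> (v', r') \<in> G \<Longrightarrow> (a *\<^sub>R v + b *\<^sub>R v', a * r + b * r') \<in> G"
    and dom: "\<And>v r. (v, r) \<in> G \<Longrightarrow> r \<le> norm v" and wG: "(w, norm w) \<in> G"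
    using G unfolding dominated_graphs_def by blast+
  define f where "f v = (THE r. (v, r) \<in> G)" for v
  have f_eq: "f v = r" if "(v, r) \<in> G" for v r
    unfolding f_def using that fnc by (auto simp: single_valued_def)
  have fG: "(v, f v) \<in> G" for v
    using total[of v] f_eq by blast
  have f_lin: "f (a *\<^sub>R v + b *\<^sub>R v') = a * f v + b * f v'" for a b v v'
    by (rule f_eq, rule lin[OF fG fG])
  have "linear f"
    by (rule linearI) (use f_lin[of 1 _ 1] f_lin[of _ _ 0] in simp_all)
  with dom[OF fG] f_eq[OF wG] show ?thesis
    by blast
qed

lemma exists_norming_functional:
  fixes w :: "'a::real_normed_vector"
  shows "\<exists>F::'a \<Rightarrow>\<^sub>L real. norm F \<le> 1 \<and> blinfun_apply F w = norm w"
proof -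
  obtain f where f: "linear f" "\<And>v. f v \<le> norm v" "f w = norm w"
    using exists_linear_norming by blast
  have bound: "\<bar>f v\<bar> \<le> norm v" for v
    using f(2)[of v] f(2)[of "- v"] linear_neg[OF f(1), of v] by simp
  have "bounded_linear f"
    using f(1) bound by (intro bounded_linear_intro[where K = 1]) (auto simp: linear_add linear_scale)
  then have "norm (Blinfun f) \<le> 1" "blinfun_apply (Blinfun f) w = norm w"
    using bound f(3) by (auto intro!: norm_blinfun_bound simp: bounded_linear_Blinfun_apply)
  then show ?thesis
    by blast
qed

section \<open>Octahedral sequences\<close>

definition octahedral_vector :: "'a::real_normed_vector set \<Rightarrow> real \<Rightarrow> 'a" where
  "octahedral_vector F e = (SOME y. norm y = 1 \<and>
     (\<forall>x\<in>span F. \<forall>t::real. norm (x + t *\<^sub>R y) \<ge> (1 - e) * (norm x + \<bar>t\<bar>)))"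

lemma octahedral_vector:
  assumes "octahedral TYPE('a::real_normed_vector)" "finite (F::'a set)" "e > 0"
  shows "norm (octahedral_vector F e) = 1"
    and "\<And>x t. x \<in> span F \<Longrightarrow> norm (x + t *\<^sub>R octahedral_vector F e) \<ge> (1 - e) * (norm x + \<bar>t\<bar>)"
proof -
  have "\<exists>y. norm y = 1 \<and> (\<forall>x\<in>span F. \<forall>t::real. norm (x + t *\<^sub>R y) \<ge> (1 - e) * (norm x + \<bar>t\<bar>))"
    using assms unfolding octahedral_def by blast
  then have "norm (octahedral_vector F e) = 1 \<and>
      (\<forall>x\<in>span F. \<forall>t::real. norm (x + t *\<^sub>R octahedral_vector F e) \<ge> (1 - e) * (norm x + \<bar>t\<bar>))"
    unfolding octahedral_vector_def by (rule someI_ex)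
  then show "norm (octahedral_vector F e) = 1"
    and "\<And>x t. x \<in> span F \<Longrightarrow> norm (x + t *\<^sub>R octahedral_vector F e) \<ge> (1 - e) * (norm x + \<bar>t\<bar>)"
    by blast+
qed

primrec octahedral_list :: "'a::real_normed_vector set \<Rightarrow> (nat \<Rightarrow> real) \<Rightarrow> nat \<Rightarrow> 'a list" where
  "octahedral_list A e 0 = []"
| "octahedral_list A e (Suc n) =
     octahedral_list A e n @ [octahedral_vector (A \<union> set (octahedral_list A e n)) (e n)]"

definition octahedral_seq :: "'a::real_normed_vector set \<Rightarrow> (nat \<Rightarrow> real) \<Rightarrow> nat \<Rightarrow> 'a" where
  "octahedral_seq A e n = last (octahedral_list A e (Suc n))"

lemma octahedral_list_eq: "octahedral_list A e n = map (octahedral_seq A e) [0..<n]"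
  by (induction n) (auto simp: octahedral_seq_def)

lemma octahedral_seq:
  assumes "octahedral TYPE('a::real_normed_vector)" "finite (A::'a set)" "e n > 0"
  shows "norm (octahedral_seq A e n) = 1"
    and "\<And>z t. z \<in> span (A \<union> octahedral_seq A e ` {..<n}) \<Longrightarrow>
           norm (z + t *\<^sub>R octahedral_seq A e n) \<ge> (1 - e n) * (norm z + \<bar>t\<bar>)"
proof -
  have "octahedral_seq A e n = octahedral_vector (A \<union> octahedral_seq A e ` {..<n}) (e n)"
  proof -
    have "set (octahedral_list A e n) = octahedral_seq A e ` {..<n}"
      by (auto simp: octahedral_list_eq)
    then show ?thesis
      by (simp add: octahedral_seq_def)
  qed
  then show "norm (octahedral_seq A e n) = 1"
    and "\<And>z t. z \<in> span (A \<union> octahedral_seq A e ` {..<n}) \<Longrightarrow>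
           norm (z + t *\<^sub>R octahedral_seq A e n) \<ge> (1 - e n) * (norm z + \<bar>t\<bar>)"
    using octahedral_vector[OF assms(1) _ assms(3)] assms(2) by simp_all
qed

lemma norming_functional_on_chain:
  fixes F :: "'a::real_normed_vector \<Rightarrow>\<^sub>L real" and z y :: "nat \<Rightarrow> 'a"
  assumes nF: "norm F \<le> 1" and top: "blinfun_apply F (z N) \<ge> norm (z N)"
    and step: "\<And>l. l < N \<Longrightarrow> z (Suc l) = z l + t l *\<^sub>R y l"
    and ny: "\<And>l. l < N \<Longrightarrow> norm (y l) = 1"
    and almost_additive: "\<And>l. l < N \<Longrightarrow> norm (z (Suc l)) \<ge> (1 - \<eta> l) * (norm (z l) + \<bar>t l\<bar>)"
  defines "E l \<equiv> \<Sum>i\<in>{l..<N}. \<eta> i * (norm (z i) + \<bar>t i\<bar>)"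
  shows "l \<le> N \<Longrightarrow> blinfun_apply F (z l) \<ge> norm (z l) - E l"
    and "l < N \<Longrightarrow> t l * blinfun_apply F (y l) \<ge> \<bar>t l\<bar> - E l"
proof -
  have F_le: "blinfun_apply F v \<le> norm v" for v
    using norm_blinfun[of F v] mult_right_mono[OF nF norm_ge_zero[of v]] by simp
  have E_step: "E l = \<eta> l * (norm (z l) + \<bar>t l\<bar>) + E (Suc l)" if "l < N" for l
    unfolding E_def using that by (simp add: sum.atLeast_Suc_lessThan)
  have F_step: "blinfun_apply F (z (Suc l)) = blinfun_apply F (z l) + t l * blinfun_apply F (y l)"
    if "l < N" for l
    using step[OF that] by (simp add: blinfun.add_right blinfun.scaleR_right)
  have F_incr: "t l * blinfun_apply F (y l) \<le> \<bar>t l\<bar>" if "l < N" for l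
    using F_le[of "t l *\<^sub>R y l"] ny[OF that] by (simp add: blinfun.scaleR_right)
  have norm_step: "norm (z (Suc l)) \<ge> norm (z l) + \<bar>t l\<bar> - \<eta> l * (norm (z l) + \<bar>t l\<bar>)"
    if "l < N" for l
    using almost_additive[OF that] by (simp add: algebra_simps)
  show points: "blinfun_apply F (z l) \<ge> norm (z l) - E l" if "l \<le> N" for l
    using that
  proof (induction l rule: inc_induct)
    case base
    then show ?case
      using top by (simp add: E_def)
  next
    case (step l)
    then show ?case
      using F_step[of l] F_incr[of l] norm_step[of l] E_step[of l] by linarith
  qed
  show "t l * blinfun_apply F (y l) \<ge> \<bar>t l\<bar> - E l" if "l < N"
    using that points[of "Suc l"] F_step[of l] F_le[of "z l"] norm_step[of l] E_step[of l]
    by simp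
qed

lemma sum_half_powers:
  "l \<le> N \<Longrightarrow> (\<Sum>i\<in>{l..<N}. (1/2::real) ^ Suc i) = (1/2) ^ l - (1/2) ^ N"
  by (induction N) (auto simp: sum.atLeastLessThan_Suc le_Suc_eq)

text \<open>The denominator i + 2 absorbs the growth of the i-th point of the chain (its norm plus the
  next coefficient is at most i + 2), so the error accumulated from step l on is at most
  \<beta> / 2^l.\<close>

definition octahedral_tolerance :: "real \<Rightarrow> nat \<Rightarrow> real" where
  "octahedral_tolerance \<beta> i = \<beta> * (1/2) ^ Suc i / (real i + 2)"

definition sign_pattern :: "nat \<Rightarrow> nat \<Rightarrow> real" where
  "sign_pattern n j = (if j = n then 1 else -1)"

lemma octahedral_tolerance_pos: "\<beta> > 0 \<Longrightarrow> octahedral_tolerance \<beta> i > 0"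
  unfolding octahedral_tolerance_def by simp

lemma sum_octahedral_tolerance_le:
  assumes "\<beta> > 0" and "l \<le> N" and b: "\<And>i. b i \<le> real i + 2"
  shows "(\<Sum>i\<in>{l..<N}. octahedral_tolerance \<beta> i * b i) \<le> \<beta> * (1/2) ^ l"
proof -
  have "(\<Sum>i\<in>{l..<N}. octahedral_tolerance \<beta> i * b i) \<le> (\<Sum>i\<in>{l..<N}. \<beta> * (1/2) ^ Suc i)"
  proof (rule sum_mono)
    fix i
    have "octahedral_tolerance \<beta> i * b i \<le> octahedral_tolerance \<beta> i * (real i + 2)"
      using b[of i] octahedral_tolerance_pos[OF \<open>\<beta> > 0\<close>, of i] by (intro mult_left_mono) auto
    also have "\<dots> = \<beta> * (1/2) ^ Suc i"
      unfolding octahedral_tolerance_def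
      by (simp only: times_divide_eq_left) (rule nonzero_mult_div_cancel_right, simp)
    finally show "octahedral_tolerance \<beta> i * b i \<le> \<beta> * (1/2) ^ Suc i" .
  qed
  also have "\<dots> = \<beta> * ((1/2) ^ l - (1/2) ^ N)"
    by (simp only: sum_distrib_left[symmetric] sum_half_powers[OF \<open>l \<le> N\<close>])
  also have "\<dots> \<le> \<beta> * (1/2) ^ l"
    using \<open>\<beta> > 0\<close> by (simp add: mult_left_mono)
  finally show ?thesis .
qed

lemma norming_functional_of_sign_pattern:
  fixes A :: "'a::real_normed_vector set"
  assumes oct: "octahedral TYPE('a)" and fin: "finite A" and sph: "A \<subseteq> sphere 0 1"
    and \<beta>: "\<beta> > 0" and x: "x \<in> A" and nF: "norm F \<le> 1"
  defines "y \<equiv> octahedral_seq A (octahedral_tolerance \<beta>)"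
  assumes norming: "blinfun_apply F (x + (\<Sum>j\<le>n. sign_pattern n j *\<^sub>R y j)) =
      norm (x + (\<Sum>j\<le>n. sign_pattern n j *\<^sub>R y j))"
  shows "blinfun_apply F x \<ge> 1 - \<beta>"
    and "\<And>j. j < n \<Longrightarrow> blinfun_apply F (- y j) \<ge> 1 - \<beta> * (1/2) ^ j"
    and "blinfun_apply F (y n) \<ge> 1 - \<beta> * (1/2) ^ n"
proof -
  define \<eta> where "\<eta> = octahedral_tolerance \<beta>"
  define t where "t = sign_pattern n"
  define z where "z l = x + (\<Sum>j<l. t j *\<^sub>R y j)" for l
  have ny: "norm (y l) = 1" for l
    unfolding y_def by (rule octahedral_seq(1)[OF oct fin octahedral_tolerance_pos[OF \<beta>]])
  have nx: "norm x = 1"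
    using x sph by auto
  have t_abs: "\<bar>t j\<bar> = 1" for j
    unfolding t_def sign_pattern_def by simp
  have step: "z (Suc l) = z l + t l *\<^sub>R y l" for l
    unfolding z_def by simp
  have "z l \<in> span (A \<union> y ` {..<l})" for l
    unfolding z_def using x by (intro span_add span_sum span_scale span_base) auto
  then have almost_additive: "norm (z (Suc l)) \<ge> (1 - \<eta> l) * (norm (z l) + \<bar>t l\<bar>)" for l
    unfolding step \<eta>_def y_def by (rule octahedral_seq(2)[OF oct fin octahedral_tolerance_pos[OF \<beta>]])
  have nz: "norm (z l) \<le> real l + 1" for l
  proof (induction l)
    case 0
    then show ?case
      using nx by (simp add: z_def)
  next
    case (Suc l)
    then show ?case
      using norm_triangle_ineq[of "z l" "t l *\<^sub>R y l"] ny[of l] t_abs[of l] by (simp add: step)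
  qed
  define E where "E l = (\<Sum>i\<in>{l..<Suc n}. \<eta> i * (norm (z i) + \<bar>t i\<bar>))" for l
  have E_bound: "E l \<le> \<beta> * (1/2) ^ l" if "l \<le> Suc n" for l
    unfolding E_def \<eta>_def using \<beta> that nz t_abs
    by (intro sum_octahedral_tolerance_le) (auto simp: add.commute add_mono)
  have top: "blinfun_apply F (z (Suc n)) \<ge> norm (z (Suc n))"
    using norming unfolding z_def t_def by (simp add: lessThan_Suc_atMost)
  note chain = norming_functional_on_chain[of F z "Suc n" t y \<eta>, OF nF top step ny almost_additive,
      folded E_def]
  show "blinfun_apply F x \<ge> 1 - \<beta>"
    using chain(1)[of 0] E_bound[of 0] nx by (simp add: z_def)
  show "blinfun_apply F (- y j) \<ge> 1 - \<beta> * (1/2) ^ j" if "j < n" for j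
    using chain(2)[of j] E_bound[of j] that by (simp add: t_def sign_pattern_def blinfun.minus_right)
  show "blinfun_apply F (y n) \<ge> 1 - \<beta> * (1/2) ^ n"
    using chain(2)[of n] E_bound[of n] by (simp add: t_def sign_pattern_def)
qed

section \<open>Measure-theoretic lemmas\<close>

lemma integrable_indicator_times:
  fixes f :: "'m \<Rightarrow> real"
  shows "A \<in> sets M \<Longrightarrow> integrable M f \<Longrightarrow> integrable M (\<lambda>x. indicator A x * f x)"
  using integrable_mult_indicator[of A M f] by simp

lemma indicator_times_partial_sums_L1:
  fixes G :: "'m \<Rightarrow> real"
  assumes G: "integrable M G" "\<And>x. G x \<ge> 0" and A: "range A \<subseteq> sets M" "disjoint_family A"
  shows "(\<lambda>n. \<integral>x. \<bar>indicator (\<Union>i. A i) x * G x - (\<Sum>i<n. indicator (A i) x * G x)\<bar> \<partial>M) \<longlonglongrightarrow> 0"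
proof -
  have [measurable]: "G \<in> borel_measurable M" "\<And>i. A i \<in> sets M"
    using G A by auto
  have partial_le: "(\<Sum>i<n. indicator (A i) x) \<le> (1::real)" for n x
  proof -
    have "(\<Sum>i<n. indicator (A i) x) = (indicator (\<Union>i<n. A i) x :: real)"
      by (rule indicator_UN_disjoint[symmetric]) (use A(2) in \<open>auto simp: disjoint_family_on_def\<close>)
    then show ?thesis
      by (simp add: indicator_def)
  qed
  have "(\<lambda>n. \<integral>x. \<bar>indicator (\<Union>i. A i) x * G x - (\<Sum>i<n. indicator (A i) x * G x)\<bar> \<partial>M) \<longlonglongrightarrow> (\<integral>x. 0 \<partial>M)"
  proof (rule integral_dominated_convergence[where w = G])
    show "AE x in M. (\<lambda>n. \<bar>indicator (\<Union>i. A i) x * G x - (\<Sum>i<n. indicator (A i) x * G x)\<bar>) \<longlonglongrightarrow> 0"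
    proof (rule AE_I2)
      fix x
      have "(\<lambda>i. indicator (A i) x * G x) sums (indicator (\<Union>i. A i) x * G x)"
        using indicator_sums[of A x] A(2) by (intro sums_mult2) (auto simp: disjoint_family_on_def)
      then have "(\<lambda>n. indicator (\<Union>i. A i) x * G x - (\<Sum>i<n. indicator (A i) x * G x))
          \<longlonglongrightarrow> indicator (\<Union>i. A i) x * G x - indicator (\<Union>i. A i) x * G x"
        unfolding sums_def by (intro tendsto_diff tendsto_const)
      then have "(\<lambda>n. indicator (\<Union>i. A i) x * G x - (\<Sum>i<n. indicator (A i) x * G x)) \<longlonglongrightarrow> 0"
        by (simp only: diff_self)
      then show "(\<lambda>n. \<bar>indicator (\<Union>i. A i) x * G x - (\<Sum>i<n. indicator (A i) x * G x)\<bar>) \<longlonglongrightarrow> 0"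
        by (rule tendsto_rabs_zero)
    qed
    show "AE x in M. norm \<bar>indicator (\<Union>i. A i) x * G x - (\<Sum>i<n. indicator (A i) x * G x)\<bar> \<le> G x" for n
    proof (rule AE_I2)
      fix x
      have "0 \<le> (\<Sum>i<n. indicator (A i) x * G x)" "(\<Sum>i<n. indicator (A i) x * G x) \<le> G x"
        using G(2)[of x] mult_right_mono[OF partial_le[where n=n and x=x] G(2)[of x]]
        by (auto simp: sum_distrib_right[symmetric] intro!: sum_nonneg mult_nonneg_nonneg)
      moreover have "0 \<le> indicator (\<Union>i. A i) x * G x" "indicator (\<Union>i. A i) x * G x \<le> G x"
        using G(2)[of x] by (simp_all add: indicator_def)
      ultimately show "norm \<bar>indicator (\<Union>i. A i) x * G x - (\<Sum>i<n. indicator (A i) x * G x)\<bar> \<le> G x"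
        by (simp only: real_norm_def abs_abs abs_le_iff) linarith
    qed
  qed (use G in auto)
  then show ?thesis
    by simp
qed

lemma finite_measure_of_sums:
  fixes \<mu> :: "'m set \<Rightarrow> real"
  assumes nonneg: "\<And>E. E \<in> sets M \<Longrightarrow> \<mu> E \<ge> 0" and empty: "\<mu> {} = 0"
    and sums: "\<And>A. range A \<subseteq> sets M \<Longrightarrow> disjoint_family A \<Longrightarrow> (\<lambda>i. \<mu> (A i)) sums \<mu> (\<Union>i. A i)"
  defines "N \<equiv> measure_of (space M) (sets M) (\<lambda>E. ennreal (\<mu> E))"
  shows "finite_measure N" and "sets N = sets M" and "\<And>E. E \<in> sets M \<Longrightarrow> emeasure N E = ennreal (\<mu> E)"
proof -
  have "countably_additive (sets M) (\<lambda>E. ennreal (\<mu> E))"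
    unfolding countably_additive_def
  proof (intro allI impI)
    fix A :: "nat \<Rightarrow> 'm set"
    assume "range A \<subseteq> sets M" "disjoint_family A" "(\<Union>i. A i) \<in> sets M"
    then have "(\<lambda>i. ennreal (\<mu> (A i))) sums ennreal (\<mu> (\<Union>i. A i))"
      using sums nonneg by (subst sums_ennreal) auto
    then show "(\<Sum>i. ennreal (\<mu> (A i))) = ennreal (\<mu> (\<Union>i. A i))"
      by (rule sums_unique[symmetric])
  qed
  moreover have "positive (sets M) (\<lambda>E. ennreal (\<mu> E))"
    using empty by (simp add: positive_def)
  ultimately show emeasure_N: "emeasure N E = ennreal (\<mu> E)" if "E \<in> sets M" for E
    unfolding N_def using that by (intro emeasure_measure_of_sigma sets.sigma_algebra_axioms)
  show "sets N = sets M"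
    unfolding N_def by simp
  have "space N = space M"
    by (simp add: N_def)
  then show "finite_measure N"
    using emeasure_N[OF sets.top] by (intro finite_measureI) simp
qed

lemma floor_quotient_approx:
  fixes K :: nat and g q C :: real
  assumes K: "K \<ge> 1" and g: "g \<ge> 0" and q: "0 \<le> q" "q \<le> C * g"
  defines "s \<equiv> nat \<lfloor>real K * q / g\<rfloor>"
  shows "s \<le> nat \<lceil>real K * max C 0\<rceil>" and "real s / real K * g \<le> q"
    and "q \<le> real s / real K * g + g / real K"
proof -
  have r_nonneg: "real K * q / g \<ge> 0"
    using q g by simp
  have r_le: "real K * q / g \<le> real K * max C 0"
  proof (cases "g = 0")
    case False
    have "C * g \<le> max C 0 * g"
      using g by (intro mult_right_mono) auto
    then have "q \<le> max C 0 * g"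
      using q(2) by linarith
    then have "q / g \<le> max C 0"
      using g False by (simp add: divide_le_eq)
    then show ?thesis
      using mult_left_mono[of "q / g" "max C 0" "real K"] by simp
  qed simp
  show "s \<le> nat \<lceil>real K * max C 0\<rceil>"
    unfolding s_def using r_le by (intro nat_mono order_trans[OF floor_mono floor_le_ceiling])
  have s_le: "real s \<le> real K * q / g" and s_gt: "real K * q / g < real s + 1"
    unfolding s_def using r_nonneg by linarith+
  have "real s / real K * g \<le> q \<and> q \<le> real s / real K * g + g / real K"
  proof (cases "g = 0")
    case True
    then show ?thesis
      using q by simp
  next
    case False
    then have "g > 0" "real K > 0"
      using g K by simp_all
    then have "real s * g \<le> real K * q" "real K * q < (real s + 1) * g"
      using s_le s_gt by (simp_all add: field_simps)
    then show ?thesis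
      using \<open>real K > 0\<close> by (simp add: field_simps)
  qed
  then show "real s / real K * g \<le> q" "q \<le> real s / real K * g + g / real K"
    by simp_all
qed

lemma nonneg_of_inverse_bounds:
  fixes x c :: real
  assumes "\<And>K::nat. K \<ge> 1 \<Longrightarrow> x \<ge> - c / real K"
  shows "x \<ge> 0"
proof (rule ccontr)
  assume "\<not> x \<ge> 0"
  then obtain n :: nat where n: "c < real n * (- x)"
    using ex_less_of_nat_mult[of "- x" c] by auto
  have "real n * (- x) \<le> real (Suc n) * (- x)"
    using \<open>\<not> x \<ge> 0\<close> by (intro mult_right_mono) auto
  with n have "x < - c / real (Suc n)"
    by (simp add: field_simps)
  with assms[of "Suc n"] show False
    by simp
qed

lemma integral_indicator_split:
  fixes q :: "'m \<Rightarrow> real"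
  assumes "integrable M q" "E \<in> sets M"
  shows "(\<integral>x. q x \<partial>M) = (\<integral>x. indicator E x * q x \<partial>M) + (\<integral>x. indicator (space M - E) x * q x \<partial>M)"
proof -
  have "(\<integral>x. q x \<partial>M) = (\<integral>x. indicator E x * q x + indicator (space M - E) x * q x \<partial>M)"
    by (intro Bochner_Integration.integral_cong) (auto simp: indicator_def)
  also have "\<dots> = (\<integral>x. indicator E x * q x \<partial>M) + (\<integral>x. indicator (space M - E) x * q x \<partial>M)"
    using assms by (intro Bochner_Integration.integral_add integrable_indicator_times) auto
  finally show ?thesis .
qed

lemma integral_outside_disjointed_le:
  fixes a :: "'m \<Rightarrow> real"
  assumes R: "\<And>j. R j \<in> sets M" and a: "integrable M a" "\<And>x. a x \<ge> 0"
  shows "(\<integral>x. indicator (space M - disjointed R n) x * a x \<partial>M)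
    \<le> (\<integral>x. indicator (space M - R n) x * a x \<partial>M) + (\<Sum>j<n. \<integral>x. indicator (R j) x * a x \<partial>M)"
proof -
  have int: "integrable M (\<lambda>x. indicator E x * a x)" if "E \<in> sets M" for E
    using that a(1) by (rule integrable_indicator_times)
  have "disjointed R n \<in> sets M"
    unfolding disjointed_def using R by auto
  then have "(\<integral>x. indicator (space M - disjointed R n) x * a x \<partial>M)
      \<le> (\<integral>x. indicator (space M - R n) x * a x + (\<Sum>j<n. indicator (R j) x * a x) \<partial>M)"
  proof (intro integral_mono int)
    show "integrable M (\<lambda>x. indicator (space M - R n) x * a x + (\<Sum>j<n. indicator (R j) x * a x))"
      using R by (intro Bochner_Integration.integrable_add Bochner_Integration.integrable_sum int) auto
    fix x assume "x \<in> space M"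
    show "indicator (space M - disjointed R n) x * a x
        \<le> indicator (space M - R n) x * a x + (\<Sum>j<n. indicator (R j) x * a x)"
    proof (cases "x \<in> R n \<and> (\<forall>j<n. x \<notin> R j)")
      case True
      then show ?thesis
        using a(2) by (auto simp: disjointed_def indicator_def intro!: sum_nonneg)
    next
      case False
      then consider "x \<notin> R n" | j where "j < n" "x \<in> R j"
        by blast
      then show ?thesis
      proof cases
        case 1
        then show ?thesis
          using a(2) \<open>x \<in> space M\<close> by (auto simp: indicator_def intro!: sum_nonneg)
      next
        case 2
        then have "indicator (R j) x * a x \<le> (\<Sum>j<n. indicator (R j) x * a x)"
          using a(2) by (intro member_le_sum) auto
        then show ?thesis
          using 2 a(2)[of x] by (auto simp: indicator_def disjointed_def)
      qed
    qed
  qed auto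
  also have "\<dots> = (\<integral>x. indicator (space M - R n) x * a x \<partial>M) + (\<Sum>j<n. \<integral>x. indicator (R j) x * a x \<partial>M)"
  proof -
    have "integrable M (\<lambda>x. indicator (space M - R n) x * a x)"
      using R by (intro int) auto
    moreover have "integrable M (\<lambda>x. \<Sum>j<n. indicator (R j) x * a x)"
      by (intro Bochner_Integration.integrable_sum int R)
    ultimately show ?thesis
      by (simp only: Bochner_Integration.integral_add Bochner_Integration.integral_sum[OF int[OF R]])
  qed
  finally show ?thesis .
qed

lemma integral_outside_disjointed_geometric:
  fixes a :: "'m \<Rightarrow> real"
  assumes R: "\<And>j. R j \<in> sets M" and a: "integrable M a" "\<And>x. a x \<ge> 0" and "\<beta> \<ge> 0"
    and before: "\<And>j. j < n \<Longrightarrow> (\<integral>x. indicator (R j) x * a x \<partial>M) \<le> \<beta> * (1/2) ^ j"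
    and now: "(\<integral>x. indicator (space M - R n) x * a x \<partial>M) \<le> \<beta> * (1/2) ^ n"
  shows "(\<integral>x. indicator (space M - disjointed R n) x * a x \<partial>M) \<le> 2 * \<beta>"
proof -
  have "(\<Sum>j<n. \<beta> * (1/2) ^ j) = 2 * \<beta> - 2 * \<beta> * (1/2) ^ n"
    by (induction n) (simp_all add: algebra_simps)
  then have "(\<Sum>j<n. \<beta> * (1/2) ^ j) + \<beta> * (1/2) ^ n \<le> 2 * \<beta>"
    using \<open>\<beta> \<ge> 0\<close> by simp
  moreover have "(\<Sum>j<n. \<integral>x. indicator (R j) x * a x \<partial>M) \<le> (\<Sum>j<n. \<beta> * (1/2) ^ j)"
    using before by (intro sum_mono) auto
  ultimately show ?thesis
    using integral_outside_disjointed_le[where R=R and n=n, OF R a] now by linarith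
qed

lemma disjointed_complements_disjoint:
  "disjointed P n \<inter> disjointed (\<lambda>j. S - P j) n = {}"
  using disjointed_subset[of P n] disjointed_subset[of "\<lambda>j. S - P j" n] by blast

lemma disjointed_sign_sets_disjoint:
  assumes "1 \<le> a" "1 \<le> b" "a \<noteq> b"
  shows "(disjointed P a \<union> disjointed (\<lambda>j. S - P j) a) \<inter> (disjointed P b \<union> disjointed (\<lambda>j. S - P j) b) = {}"
proof -
  have cross: "disjointed P c \<inter> disjointed (\<lambda>j. S - P j) d = {}" if "1 \<le> c" "1 \<le> d" for c d
  proof -
    have "x \<notin> P 0" if "x \<in> disjointed P c" for x
      using that \<open>1 \<le> c\<close> by (auto simp: disjointed_def)
    moreover have "x \<in> P 0" if "x \<in> disjointed (\<lambda>j. S - P j) d" for x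
      using that \<open>1 \<le> d\<close> by (auto simp: disjointed_def)
    ultimately show ?thesis
      by blast
  qed
  have "disjointed R a \<inter> disjointed R b = {}" for R :: "nat \<Rightarrow> 'a set"
    using disjoint_family_disjointed[of R] \<open>a \<noteq> b\<close> by (auto simp: disjoint_family_on_def)
  with cross[OF assms(1,2)] cross[OF assms(2,1)] show ?thesis
    by blast
qed

text \<open>+1 on the set D_n+ of the header and -1 on D_n-, with S the whole space.\<close>

definition sign_function :: "(nat \<Rightarrow> 'a set) \<Rightarrow> 'a set \<Rightarrow> nat \<Rightarrow> 'a \<Rightarrow> real" where
  "sign_function P S n x = indicator (disjointed P n) x - indicator (disjointed (\<lambda>j. S - P j) n) x"

lemma abs_sign_function:
  "\<bar>sign_function P S n x\<bar> = indicator (disjointed P n \<union> disjointed (\<lambda>j. S - P j) n) x"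
  using disjointed_complements_disjoint[of P n S] by (auto simp: sign_function_def indicator_def)

lemma sum_abs_sign_function_le: "(\<Sum>m\<le>N. \<bar>sign_function P S (Suc m) x\<bar>) \<le> 1"
proof -
  have "(\<Sum>m\<le>N. \<bar>sign_function P S (Suc m) x\<bar>) =
      indicator (\<Union>m\<le>N. disjointed P (Suc m) \<union> disjointed (\<lambda>j. S - P j) (Suc m)) x"
    unfolding abs_sign_function using disjointed_sign_sets_disjoint[of "Suc _" "Suc _" P S]
    by (intro indicator_UN_disjoint[symmetric]) (auto simp: disjoint_family_on_def)
  then show ?thesis
    by (simp add: indicator_def)
qed

lemma sign_function_eq_0:
  assumes "1 \<le> a" "1 \<le> b" "a \<noteq> b" "x \<in> disjointed P b \<union> disjointed (\<lambda>j. S - P j) b"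
  shows "sign_function P S a x = 0"
  using disjointed_sign_sets_disjoint[OF assms(1-3), of P S] assms(4)
  by (auto simp: sign_function_def indicator_def)

lemma borel_measurable_sign_function:
  assumes "\<And>j. P j \<in> sets M"
  shows "sign_function P (space M) n \<in> borel_measurable M"
proof -
  have "disjointed P n \<in> sets M" "disjointed (\<lambda>j. space M - P j) n \<in> sets M"
    using sets.range_disjointed_sets[of P M] sets.range_disjointed_sets[of "\<lambda>j. space M - P j" M] assms
    by auto
  then show ?thesis
    unfolding sign_function_def by measurable
qed

text \<open>Countably many L1-bounded families are dominated, up to the weights 2^n, by the single
  integrable function G = \<Sum>n 2^-n \<Sum>x\<in>A |h n x|.\<close>

lemma exists_integrable_dominant:
  fixes h :: "nat \<Rightarrow> 'x \<Rightarrow> 'm \<Rightarrow> real" and M :: "'m measure"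
  assumes fin: "finite A" and h: "\<And>n x. x \<in> A \<Longrightarrow> integrable M (h n x)"
    and h_le: "\<And>n x. x \<in> A \<Longrightarrow> (\<integral>\<omega>. \<bar>h n x \<omega>\<bar> \<partial>M) \<le> 1"
  obtains G Z where "integrable M G" "\<And>\<omega>. G \<omega> \<ge> 0" "Z \<in> sets M" "AE \<omega> in M. \<omega> \<notin> Z"
    "\<And>n x \<omega>. x \<in> A \<Longrightarrow> \<omega> \<in> space M - Z \<Longrightarrow> \<bar>h n x \<omega>\<bar> \<le> 2 ^ n * G \<omega>"
proof -
  define H where "H n \<omega> = (\<Sum>x\<in>A. \<bar>h n x \<omega>\<bar>)" for n \<omega>
  have [measurable]: "H n \<in> borel_measurable M" for n
    unfolding H_def by (intro borel_measurable_sum borel_measurable_abs borel_measurable_integrable h)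
  have H_nonneg: "H n \<omega> \<ge> 0" for n \<omega>
    unfolding H_def by (intro sum_nonneg) auto
  have H_int: "integrable M (H n)" for n
    unfolding H_def by (rule Bochner_Integration.integrable_sum) (auto intro: h)
  have H_le: "(\<integral>\<omega>. H n \<omega> \<partial>M) \<le> real (card A)" for n
  proof -
    have "(\<integral>\<omega>. H n \<omega> \<partial>M) = (\<Sum>x\<in>A. \<integral>\<omega>. \<bar>h n x \<omega>\<bar> \<partial>M)"
      unfolding H_def by (rule Bochner_Integration.integral_sum) (auto intro: h)
    also have "\<dots> \<le> (\<Sum>x\<in>A. 1)"
      using h_le by (intro sum_mono)
    finally show ?thesis
      by simp
  qed
  define Gs where "Gs \<omega> = (\<Sum>n. ennreal ((1/2) ^ n * H n \<omega>))" for \<omega>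
  have [measurable]: "Gs \<in> borel_measurable M"
    unfolding Gs_def by measurable
  have "(\<integral>\<^sup>+\<omega>. Gs \<omega> \<partial>M) = (\<Sum>n. \<integral>\<^sup>+\<omega>. ennreal ((1/2) ^ n * H n \<omega>) \<partial>M)"
    unfolding Gs_def by (rule nn_integral_suminf) measurable
  also have "\<dots> = (\<Sum>n. ennreal ((1/2) ^ n * (\<integral>\<omega>. H n \<omega> \<partial>M)))"
    using H_int H_nonneg by (subst nn_integral_eq_integral) auto
  also have "\<dots> \<le> (\<Sum>n. ennreal ((1/2) ^ n * real (card A)))"
    using H_le by (intro suminf_le summableI ennreal_leI mult_left_mono) auto
  also have "\<dots> = ennreal (\<Sum>n. (1/2) ^ n * real (card A))"
    by (rule suminf_ennreal2) (auto intro: summable_mult2 summable_geometric)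
  finally have Gs_finite: "(\<integral>\<^sup>+\<omega>. Gs \<omega> \<partial>M) \<noteq> \<infinity>"
    using top_neq_ennreal by (auto simp: top_unique)
  define Z where "Z = {\<omega> \<in> space M. Gs \<omega> = \<infinity>}"
  define G where "G \<omega> = enn2real (Gs \<omega>)" for \<omega>
  show ?thesis
  proof (rule that)
    show "Z \<in> sets M"
      unfolding Z_def by measurable
    show "AE \<omega> in M. \<omega> \<notin> Z"
      using nn_integral_noteq_infinite[OF _ Gs_finite] unfolding Z_def by auto
    show "G \<omega> \<ge> 0" for \<omega>
      unfolding G_def by simp
    have "(\<integral>\<^sup>+\<omega>. ennreal (norm (G \<omega>)) \<partial>M) \<le> (\<integral>\<^sup>+\<omega>. Gs \<omega> \<partial>M)"
      unfolding G_def by (intro nn_integral_mono) (auto simp: ennreal_enn2real_if)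
    with Gs_finite show "integrable M G"
      unfolding G_def by (auto simp: integrable_iff_bounded top.not_eq_extremum le_less_trans)
    fix n x \<omega> assume x: "x \<in> A" and \<omega>: "\<omega> \<in> space M - Z"
    have "ennreal ((1/2) ^ n * H n \<omega>) \<le> Gs \<omega>"
      unfolding Gs_def using sum_le_suminf[OF summableI, of "{n}" "\<lambda>n. ennreal ((1/2) ^ n * H n \<omega>)"] by simp
    moreover have "Gs \<omega> < top"
      using \<omega> unfolding Z_def by (simp add: top.not_eq_extremum)
    ultimately have "enn2real (ennreal ((1/2) ^ n * H n \<omega>)) \<le> G \<omega>"
      unfolding G_def by (rule enn2real_mono)
    then have "(1/2) ^ n * H n \<omega> \<le> G \<omega>"
      using H_nonneg[of n \<omega>] by simp
    then have "H n \<omega> \<le> 2 ^ n * G \<omega>"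
      by (simp add: field_simps)
    moreover have "\<bar>h n x \<omega>\<bar> \<le> H n \<omega>"
      unfolding H_def using fin x by (intro member_le_sum) auto
    ultimately show "\<bar>h n x \<omega>\<bar> \<le> 2 ^ n * G \<omega>"
      by linarith
  qed
qed

section \<open>Isometric copies of c0\<close>

definition isometric_c0_basis :: "(nat \<Rightarrow> 'b::real_normed_vector) \<Rightarrow> bool" where
  "isometric_c0_basis u \<longleftrightarrow> (\<forall>n. norm (u n) = 1) \<and>
     (\<forall>n (c::nat \<Rightarrow> real). norm (\<Sum>j\<le>n. c j *\<^sub>R u j) = Max ((\<lambda>j. \<bar>c j\<bar>) ` {..n}))"

lemma canon_apply: "blinfun_apply (canon x) f = blinfun_apply f x"
  unfolding canon_def by (subst bounded_linear_Blinfun_apply) (auto intro: blinfun.bounded_linear_left)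

lemma span_range_nat_sums:
  fixes u :: "nat \<Rightarrow> 'b::real_vector"
  assumes "v \<in> span (range u)"
  obtains n c where "v = (\<Sum>j\<le>n. c j *\<^sub>R u j)"
proof -
  let ?S = "{v. \<exists>n c. v = (\<Sum>j\<le>n. c j *\<^sub>R u j)}"
  have pad: "(\<Sum>j\<le>N. (if j \<le> n then c j else 0) *\<^sub>R u j) = (\<Sum>j\<le>n. c j *\<^sub>R u j)" if "n \<le> N" for n N c
    by (rule sum.mono_neutral_cong_right) (use that in auto)
  have "span (range u) \<subseteq> ?S"
  proof (rule span_minimal)
    show "range u \<subseteq> ?S"
    proof
      fix v assume "v \<in> range u"
      then obtain k where "v = u k"
        by auto
      have "(\<Sum>j\<le>k. (if j = k then 1 else 0) *\<^sub>R u j) = (\<Sum>j\<le>k. if j = k then u j else 0)"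
        by (intro sum.cong) auto
      then have "(\<Sum>j\<le>k. (if j = k then 1 else 0) *\<^sub>R u j) = v"
        using \<open>v = u k\<close> by simp
      then show "v \<in> ?S"
        by (intro CollectI exI[of _ k] exI[of _ "\<lambda>j. if j = k then 1 else 0"]) simp
    qed
    show "subspace ?S"
    proof (rule subspaceI)
      show "0 \<in> ?S"
        by (intro CollectI exI[of _ 0] exI[of _ "\<lambda>j. 0"]) simp
    next
      fix x y assume "x \<in> ?S" "y \<in> ?S"
      then obtain n c m d where "x = (\<Sum>j\<le>n. c j *\<^sub>R u j)" "y = (\<Sum>j\<le>m. d j *\<^sub>R u j)"
        by blast
      then have "x + y = (\<Sum>j\<le>max n m. ((if j \<le> n then c j else 0) + (if j \<le> m then d j else 0)) *\<^sub>R u j)"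
        using pad[of n "max n m" c, symmetric] pad[of m "max n m" d, symmetric] by (simp add: sum.distrib scaleR_add_left)
      then show "x + y \<in> ?S"
        by (intro CollectI exI)
    next
      fix a x assume "x \<in> ?S"
      then obtain n c where "x = (\<Sum>j\<le>n. c j *\<^sub>R u j)"
        by blast
      then have "a *\<^sub>R x = (\<Sum>j\<le>n. (a * c j) *\<^sub>R u j)"
        by (simp add: scaleR_sum_right)
      then show "a *\<^sub>R x \<in> ?S"
        by (intro CollectI exI)
    qed
  qed
  then obtain n c where "v = (\<Sum>j\<le>n. c j *\<^sub>R u j)"
    using assms by blast
  then show ?thesis
    by (rule that)
qed

text \<open>The symmetry of A is what allows the functional to match the sign of the largest coefficient.\<close>

lemma biorthogonal_norming_functional:
  fixes u :: "nat \<Rightarrow> ('a::real_normed_vector \<Rightarrow>\<^sub>L real) \<Rightarrow>\<^sub>L real"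
    and F :: "nat \<Rightarrow> 'a \<Rightarrow> ('a \<Rightarrow>\<^sub>L real)"
  assumes norm_F: "\<And>k x. x \<in> A \<Longrightarrow> norm (F k x) = 1"
    and biorth: "\<And>m k x. x \<in> A \<Longrightarrow> blinfun_apply (u m) (F k x) = (if m = k then 1 else 0)"
    and F_x: "\<And>k x. x \<in> A \<Longrightarrow> blinfun_apply (F k x) x \<ge> 1 - \<delta>"
    and A_sym: "\<And>x. x \<in> A \<Longrightarrow> - x \<in> A" and x: "x \<in> A"
  shows "\<exists>f. norm f = 1 \<and> blinfun_apply (\<Sum>j\<le>n. c j *\<^sub>R u j) f = Max ((\<lambda>j. \<bar>c j\<bar>) ` {..n}) \<and>
    blinfun_apply f x \<ge> 1 - \<delta>"
proof -
  obtain k where k: "k \<le> n" "\<bar>c k\<bar> = Max ((\<lambda>j. \<bar>c j\<bar>) ` {..n})"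
    using Max_in[of "(\<lambda>j. \<bar>c j\<bar>) ` {..n}"] by fastforce
  define \<sigma> where "\<sigma> = (if c k \<ge> 0 then 1 else -1::real)"
  have \<sigma>x: "\<sigma> *\<^sub>R x \<in> A" and \<sigma>: "\<bar>\<sigma>\<bar> = 1" "\<sigma> * c k = \<bar>c k\<bar>"
    using x A_sym unfolding \<sigma>_def by auto
  have "blinfun_apply (\<Sum>j\<le>n. c j *\<^sub>R u j) (F k (\<sigma> *\<^sub>R x)) = (\<Sum>j\<le>n. c j * (if j = k then 1 else 0))"
    using biorth[OF \<sigma>x] by (simp add: blinfun.sum_left blinfun.scaleR_left)
  also have "\<dots> = c k"
    using k(1) by (simp add: if_distrib cong: if_cong)
  finally have F_sum: "blinfun_apply (\<Sum>j\<le>n. c j *\<^sub>R u j) (F k (\<sigma> *\<^sub>R x)) = c k" .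
  have "norm (\<sigma> *\<^sub>R F k (\<sigma> *\<^sub>R x)) = 1"
    using norm_F[OF \<sigma>x, of k] \<sigma>(1) by simp
  moreover have "blinfun_apply (\<Sum>j\<le>n. c j *\<^sub>R u j) (\<sigma> *\<^sub>R F k (\<sigma> *\<^sub>R x)) = Max ((\<lambda>j. \<bar>c j\<bar>) ` {..n})"
    using F_sum \<sigma>(2) k(2) by (simp add: blinfun.scaleR_right)
  moreover have "blinfun_apply (\<sigma> *\<^sub>R F k (\<sigma> *\<^sub>R x)) x = blinfun_apply (F k (\<sigma> *\<^sub>R x)) (\<sigma> *\<^sub>R x)"
    by (simp add: blinfun.scaleR_left blinfun.scaleR_right)
  ultimately show ?thesis
    using F_x[OF \<sigma>x, of k] by (intro exI[of _ "\<sigma> *\<^sub>R F k (\<sigma> *\<^sub>R x)"]) simp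
qed

lemma isometric_c0_basis_of_biorthogonal:
  fixes u :: "nat \<Rightarrow> ('a::real_normed_vector \<Rightarrow>\<^sub>L real) \<Rightarrow>\<^sub>L real"
    and F :: "nat \<Rightarrow> 'a \<Rightarrow> ('a \<Rightarrow>\<^sub>L real)"
  assumes upper: "\<And>n c. norm (\<Sum>j\<le>n. c j *\<^sub>R u j) \<le> Max ((\<lambda>j. \<bar>c j\<bar>) ` {..n})"
    and norm_F: "\<And>k x. x \<in> A \<Longrightarrow> norm (F k x) = 1"
    and biorth: "\<And>m k x. x \<in> A \<Longrightarrow> blinfun_apply (u m) (F k x) = (if m = k then 1 else 0)"
    and F_x: "\<And>k x. x \<in> A \<Longrightarrow> blinfun_apply (F k x) x \<ge> 1 - \<delta>"
    and "x0 \<in> A" and A_sym: "\<And>x. x \<in> A \<Longrightarrow> - x \<in> A"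
  shows "isometric_c0_basis u"
    and "\<And>x v. x \<in> A \<Longrightarrow> v \<in> closure (span (range u)) \<Longrightarrow> norm (canon x + v) \<ge> 1 - \<delta> + norm v"
proof -
  have lower: "\<exists>f. norm f = 1 \<and> blinfun_apply (\<Sum>j\<le>n. c j *\<^sub>R u j) f = Max ((\<lambda>j. \<bar>c j\<bar>) ` {..n}) \<and>
      blinfun_apply f x \<ge> 1 - \<delta>" if "x \<in> A" for x n c
    using norm_F biorth F_x A_sym that by (rule biorthogonal_norming_functional)
  have norm_sum: "norm (\<Sum>j\<le>n. c j *\<^sub>R u j) = Max ((\<lambda>j. \<bar>c j\<bar>) ` {..n})" for n c
  proof -
    obtain f where "norm f = 1" "blinfun_apply (\<Sum>j\<le>n. c j *\<^sub>R u j) f = Max ((\<lambda>j. \<bar>c j\<bar>) ` {..n})"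
      using lower[OF \<open>x0 \<in> A\<close>, where n=n and c=c] by blast
    then have "\<bar>Max ((\<lambda>j. \<bar>c j\<bar>) ` {..n})\<bar> \<le> norm (\<Sum>j\<le>n. c j *\<^sub>R u j)"
      using norm_blinfun[of "\<Sum>j\<le>n. c j *\<^sub>R u j" f] by simp
    then have "Max ((\<lambda>j. \<bar>c j\<bar>) ` {..n}) \<le> norm (\<Sum>j\<le>n. c j *\<^sub>R u j)"
      by (rule order_trans[OF abs_ge_self])
    with upper[where n=n and c=c] show ?thesis
      by linarith
  qed
  moreover have "norm (u n) = 1" for n
  proof -
    have "(\<Sum>j\<le>n. (if j = n then 1 else 0) *\<^sub>R u j) = (\<Sum>j\<le>n. if j = n then u j else 0)"
      by (intro sum.cong) auto
    moreover have "Max ((\<lambda>j. \<bar>if j = n then 1 else 0::real\<bar>) ` {..n}) = 1"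
      by (rule Max_eqI) (auto simp: image_def)
    ultimately show ?thesis
      using norm_sum[where n=n and c="\<lambda>j. if j = n then 1 else 0"] by simp
  qed
  ultimately show "isometric_c0_basis u"
    unfolding isometric_c0_basis_def by blast
  fix x assume x: "x \<in> A"
  have "norm (canon x + v) \<ge> 1 - \<delta> + norm v" if v_span: "v \<in> span (range u)" for v
  proof -
    obtain n c where v: "v = (\<Sum>j\<le>n. c j *\<^sub>R u j)"
      using span_range_nat_sums[OF v_span] by blast
    obtain f where f: "norm f = 1" "blinfun_apply v f = norm v" "blinfun_apply f x \<ge> 1 - \<delta>"
      using lower[OF x, where n=n and c=c] norm_sum[where n=n and c=c] v by metis
    have "blinfun_apply (canon x + v) f \<le> norm (canon x + v)"
      using norm_blinfun[of "canon x + v" f] f(1) by simp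
    with f show ?thesis
      by (simp add: canon_apply blinfun.add_left)
  qed
  then have "closure (span (range u)) \<subseteq> {v. 1 - \<delta> + norm v \<le> norm (canon x + v)}"
    by (intro closure_minimal closed_Collect_le continuous_intros) auto
  then show "v \<in> closure (span (range u)) \<Longrightarrow> norm (canon x + v) \<ge> 1 - \<delta> + norm v" for v
    by blast
qed

section \<open>Spaces whose dual is an L1 space\<close>

locale dual_L1 =
  fixes T :: "('a::real_normed_vector \<Rightarrow>\<^sub>L real) \<Rightarrow> 'm \<Rightarrow> real" and M :: "'m measure"
  assumes T_linear: "\<And>f g a b. AE x in M. T (a *\<^sub>R f + b *\<^sub>R g) x = a * T f x + b * T g x"
    and integrable_T: "\<And>f. integrable M (T f)"
    and norm_eq_integral_T: "\<And>f. norm f = (\<integral>x. \<bar>T f x\<bar> \<partial>M)"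
    and T_surj: "\<And>g. integrable M g \<Longrightarrow> \<exists>f. AE x in M. T f x = g x"
begin

definition dual_of :: "('m \<Rightarrow> real) \<Rightarrow> ('a \<Rightarrow>\<^sub>L real)" where
  "dual_of g = (SOME f. AE x in M. T f x = g x)"

definition bidual_of :: "('m \<Rightarrow> real) \<Rightarrow> (('a \<Rightarrow>\<^sub>L real) \<Rightarrow>\<^sub>L real)" where
  "bidual_of g = Blinfun (\<lambda>f. \<integral>x. g x * T f x \<partial>M)"

lemma borel_measurable_T [measurable]: "T f \<in> borel_measurable M"
  using integrable_T by (rule borel_measurable_integrable)

lemma T_dual_of: "integrable M g \<Longrightarrow> AE x in M. T (dual_of g) x = g x"
  unfolding dual_of_def using T_surj by (rule someI_ex)

lemma T_eqI:
  assumes "AE x in M. T f x = T g x"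
  shows "f = g"
proof -
  have "AE x in M. T (f - g) x = 0"
    using T_linear[of 1 f "-1" g] assms by eventually_elim simp
  then have "(\<integral>x. \<bar>T (f - g) x\<bar> \<partial>M) = 0"
    by (simp add: integral_eq_zero_AE)
  then show ?thesis
    using norm_eq_integral_T[of "f - g"] by simp
qed

lemma dual_of_unique:
  assumes "integrable M g" "AE x in M. T f x = g x"
  shows "dual_of g = f"
  using T_dual_of[OF assms(1)] assms(2) by (intro T_eqI) (auto elim: AE_mp)

lemma dual_of_T: "dual_of (T f) = f"
  by (rule dual_of_unique) (auto simp: integrable_T)

lemma dual_of_cong:
  assumes "AE x in M. g x = h x"
  shows "dual_of g = dual_of h"
proof -
  have "(AE x in M. T f x = g x) \<longleftrightarrow> (AE x in M. T f x = h x)" for f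
    using assms by (auto elim: AE_mp)
  then show ?thesis
    unfolding dual_of_def by simp
qed

lemma dual_of_lincomb:
  assumes "integrable M g" "integrable M h"
  shows "dual_of (\<lambda>x. a * g x + b * h x) = a *\<^sub>R dual_of g + b *\<^sub>R dual_of h"
  using assms T_linear[of a "dual_of g" b "dual_of h"] T_dual_of[OF assms(1)] T_dual_of[OF assms(2)]
  by (intro dual_of_unique) (auto elim!: AE_mp)

lemma dual_of_add: "integrable M g \<Longrightarrow> integrable M h \<Longrightarrow> dual_of (\<lambda>x. g x + h x) = dual_of g + dual_of h"
  using dual_of_lincomb[of g h 1 1] by simp

lemma dual_of_scale: "integrable M g \<Longrightarrow> dual_of (\<lambda>x. a * g x) = a *\<^sub>R dual_of g"
  using dual_of_lincomb[of g g a 0] by simp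

lemma dual_of_diff: "integrable M g \<Longrightarrow> integrable M h \<Longrightarrow> dual_of (\<lambda>x. g x - h x) = dual_of g - dual_of h"
  using dual_of_lincomb[of g h 1 "-1"] by simp

lemma dual_of_zero: "dual_of (\<lambda>x. 0) = 0"
  using dual_of_scale[of "\<lambda>x. 0" 0] by simp

lemma dual_of_sum:
  assumes "finite I" "\<And>i. i \<in> I \<Longrightarrow> integrable M (g i)"
  shows "dual_of (\<lambda>x. \<Sum>i\<in>I. g i x) = (\<Sum>i\<in>I. dual_of (g i))"
  using assms by (induction I rule: finite_induct) (auto simp: dual_of_zero dual_of_add)

lemma norm_dual_of:
  assumes "integrable M g"
  shows "norm (dual_of g) = (\<integral>x. \<bar>g x\<bar> \<partial>M)"
  unfolding norm_eq_integral_T using T_dual_of[OF assms] assms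
  by (intro integral_cong_AE) (auto elim: AE_mp)

lemma dual_of_apply_le:
  assumes "integrable M g" "norm v \<le> 1"
  shows "\<bar>blinfun_apply (dual_of g) v\<bar> \<le> (\<integral>x. \<bar>g x\<bar> \<partial>M)"
proof -
  have "\<bar>blinfun_apply (dual_of g) v\<bar> \<le> (\<integral>x. \<bar>g x\<bar> \<partial>M) * norm v"
    using norm_blinfun[of "dual_of g" v] norm_dual_of[OF assms(1)] by simp
  also have "\<dots> \<le> (\<integral>x. \<bar>g x\<bar> \<partial>M)"
    using assms(2) by (intro mult_left_le) auto
  finally show ?thesis .
qed

lemma integrable_bounded_times_T:
  assumes "g \<in> borel_measurable M" "\<And>x. \<bar>g x\<bar> \<le> B"
  shows "integrable M (\<lambda>x. g x * T f x)"
proof (rule Bochner_Integration.integrable_bound[of _ "\<lambda>x. B * T f x"])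
  show "integrable M (\<lambda>x. B * T f x)"
    using integrable_T by auto
  show "(\<lambda>x. g x * T f x) \<in> borel_measurable M"
    using assms(1) by measurable
  have "B \<ge> 0"
    using assms(2)[of undefined] by linarith
  then show "AE x in M. norm (g x * T f x) \<le> norm (B * T f x)"
    using assms(2) by (auto simp: abs_mult intro!: mult_right_mono)
qed

lemma bounded_linear_bidual_of:
  assumes g: "g \<in> borel_measurable M" and gB: "\<And>x. \<bar>g x\<bar> \<le> B"
  shows "bounded_linear (\<lambda>f. \<integral>x. g x * T f x \<partial>M)"
    and "\<And>f. \<bar>\<integral>x. g x * T f x \<partial>M\<bar> \<le> B * norm f"
proof -
  note int = integrable_bounded_times_T[OF g gB]
  show bound: "\<bar>\<integral>x. g x * T f x \<partial>M\<bar> \<le> B * norm f" for f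
  proof -
    have "B \<ge> 0"
      using gB[of undefined] by linarith
    have "\<bar>\<integral>x. g x * T f x \<partial>M\<bar> \<le> (\<integral>x. \<bar>g x * T f x\<bar> \<partial>M)"
      by (rule integral_abs_bound)
    also have "\<dots> \<le> (\<integral>x. B * \<bar>T f x\<bar> \<partial>M)"
      using integrable_abs[OF int[of f]] integrable_T gB \<open>B \<ge> 0\<close>
      by (intro integral_mono) (auto simp: abs_mult intro!: mult_right_mono)
    also have "\<dots> = B * norm f"
      using norm_eq_integral_T by simp
    finally show ?thesis .
  qed
  show "bounded_linear (\<lambda>f. \<integral>x. g x * T f x \<partial>M)"
  proof (rule bounded_linear_intro[where K = B])
    fix f f' :: "'a \<Rightarrow>\<^sub>L real" and r :: real
    have "(\<integral>x. g x * T (f + f') x \<partial>M) = (\<integral>x. g x * T f x + g x * T f' x \<partial>M)"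
      using T_linear[of 1 f 1 f'] g by (intro integral_cong_AE) (auto elim!: AE_mp simp: algebra_simps)
    then show "(\<integral>x. g x * T (f + f') x \<partial>M) = (\<integral>x. g x * T f x \<partial>M) + (\<integral>x. g x * T f' x \<partial>M)"
      using int by simp
    have "(\<integral>x. g x * T (r *\<^sub>R f) x \<partial>M) = (\<integral>x. r * (g x * T f x) \<partial>M)"
      using T_linear[of r f 0 f] g by (intro integral_cong_AE) (auto elim!: AE_mp simp: algebra_simps)
    then show "(\<integral>x. g x * T (r *\<^sub>R f) x \<partial>M) = r *\<^sub>R (\<integral>x. g x * T f x \<partial>M)"
      by simp
    show "norm (\<integral>x. g x * T f x \<partial>M) \<le> norm f * B"
      using bound[of f] by (simp add: mult.commute)
  qed
qed

lemma bidual_of_apply: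
  "g \<in> borel_measurable M \<Longrightarrow> (\<And>x. \<bar>g x\<bar> \<le> B) \<Longrightarrow> blinfun_apply (bidual_of g) f = (\<integral>x. g x * T f x \<partial>M)"
  unfolding bidual_of_def by (subst bounded_linear_Blinfun_apply[OF bounded_linear_bidual_of(1)]) auto

lemma norm_bidual_of_le:
  assumes g: "g \<in> borel_measurable M" and gB: "\<And>x. \<bar>g x\<bar> \<le> B"
  shows "norm (bidual_of g) \<le> B"
  using bounded_linear_bidual_of(2)[OF g gB] gB[of undefined]
  by (intro norm_blinfun_bound) (auto simp: bidual_of_apply[OF g gB])

lemma bidual_of_dual_of:
  assumes g: "g \<in> borel_measurable M" and gB: "\<And>x. \<bar>g x\<bar> \<le> B" and p: "integrable M p"
  shows "blinfun_apply (bidual_of g) (dual_of p) = (\<integral>x. g x * p x \<partial>M)"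
  unfolding bidual_of_apply[OF g gB] using T_dual_of[OF p] g p
  by (intro integral_cong_AE) (auto elim!: AE_mp)

lemma bidual_of_sum:
  assumes "finite I" and g: "\<And>i. g i \<in> borel_measurable M" and gB: "\<And>i x. \<bar>g i x\<bar> \<le> B"
  shows "(\<Sum>i\<in>I. c i *\<^sub>R bidual_of (g i)) = bidual_of (\<lambda>x. \<Sum>i\<in>I. c i * g i x)"
proof (rule blinfun_eqI)
  fix f
  have B: "\<bar>\<Sum>i\<in>I. c i * g i x\<bar> \<le> (\<Sum>i\<in>I. \<bar>c i\<bar> * B)" for x
    by (rule order.trans[OF sum_abs]) (use gB in \<open>auto simp: abs_mult intro!: sum_mono mult_left_mono\<close>)
  have "blinfun_apply (\<Sum>i\<in>I. c i *\<^sub>R bidual_of (g i)) f = (\<Sum>i\<in>I. c i * (\<integral>x. g i x * T f x \<partial>M))"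
    using bidual_of_apply[OF g gB] by (simp add: blinfun.sum_left blinfun.scaleR_left)
  also have "\<dots> = (\<integral>x. (\<Sum>i\<in>I. c i * g i x) * T f x \<partial>M)"
    using integrable_bounded_times_T[OF g gB] by (simp add: sum_distrib_right mult.assoc)
  also have "\<dots> = blinfun_apply (bidual_of (\<lambda>x. \<Sum>i\<in>I. c i * g i x)) f"
    by (rule bidual_of_apply[symmetric, OF _ B]) (use g in measurable)
  finally show "blinfun_apply (\<Sum>i\<in>I. c i *\<^sub>R bidual_of (g i)) f = blinfun_apply (bidual_of (\<lambda>x. \<Sum>i\<in>I. c i * g i x)) f" .
qed

definition dual_measure :: "('m \<Rightarrow> real) \<Rightarrow> 'a \<Rightarrow> 'm set \<Rightarrow> real" where
  "dual_measure G y E = blinfun_apply (dual_of (\<lambda>x. indicator E x * G x)) y"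

lemma abs_dual_measure_le:
  assumes G: "integrable M G" "\<And>x. G x \<ge> 0" and y: "norm y \<le> 1" and E: "E \<in> sets M"
  shows "\<bar>dual_measure G y E\<bar> \<le> (\<integral>x. indicator E x * G x \<partial>M)"
  using dual_of_apply_le[OF integrable_indicator_times[OF E G(1)] y] G(2)
  by (simp add: dual_measure_def abs_mult)

lemma dual_measure_sums:
  assumes G: "integrable M G" "\<And>x. G x \<ge> 0" and A: "range A \<subseteq> sets M" "disjoint_family A"
  shows "(\<lambda>i. dual_measure G y (A i)) sums dual_measure G y (\<Union>i. A i)"
proof -
  let ?g = "\<lambda>i x. indicator (A i) x * G x" and ?U = "\<lambda>x. indicator (\<Union>i. A i) x * G x"
  have "A i \<in> sets M" "(\<Union>i. A i) \<in> sets M" for i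
    using A by auto
  then have int: "integrable M (?g i)" "integrable M ?U" for i
    using G(1) by (auto intro!: integrable_indicator_times)
  have "norm (dual_of ?U - dual_of (\<lambda>x. \<Sum>i<n. ?g i x)) =
      (\<integral>x. \<bar>?U x - (\<Sum>i<n. ?g i x)\<bar> \<partial>M)" for n
  proof -
    have "integrable M (\<lambda>x. \<Sum>i<n. ?g i x)"
      using int by (intro Bochner_Integration.integrable_sum) blast
    then have "dual_of ?U - dual_of (\<lambda>x. \<Sum>i<n. ?g i x) = dual_of (\<lambda>x. ?U x - (\<Sum>i<n. ?g i x))"
      using int by (intro dual_of_diff[symmetric])
    then show ?thesis
      using int \<open>integrable M (\<lambda>x. \<Sum>i<n. ?g i x)\<close> by (simp add: norm_dual_of)
  qed
  then have "(\<lambda>n. norm (dual_of ?U - dual_of (\<lambda>x. \<Sum>i<n. ?g i x))) \<longlonglongrightarrow> 0"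
    using indicator_times_partial_sums_L1[OF G A] by simp
  then have "(\<lambda>n. dual_of ?U - dual_of (\<lambda>x. \<Sum>i<n. ?g i x)) \<longlonglongrightarrow> 0"
    by (rule tendsto_norm_zero_cancel)
  moreover have "dual_of (\<lambda>x. \<Sum>i<n. ?g i x) = (\<Sum>i<n. dual_of (?g i))" for n
    by (rule dual_of_sum) (simp_all add: int)
  ultimately have "(\<lambda>n. dual_of ?U - (dual_of ?U - (\<Sum>i<n. dual_of (?g i)))) \<longlonglongrightarrow> dual_of ?U - 0"
    by (intro tendsto_diff tendsto_const) simp
  then have "(\<lambda>n. \<Sum>i<n. dual_of (?g i)) \<longlonglongrightarrow> dual_of ?U"
    by simp
  then have "(\<lambda>i. dual_of (?g i)) sums dual_of ?U"
    by (simp add: sums_def)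
  then show ?thesis
    unfolding dual_measure_def by (intro bounded_linear.sums[OF blinfun.bounded_linear_left])
qed

text \<open>Adding the integral of G over E to dual_measure G y E gives a finite measure, which is compared
  with E \<mapsto> (integral of G over E) by the unsigned Hahn decomposition.\<close>

lemma dual_measure_Hahn_decomposition:
  assumes G: "integrable M G" "\<And>x. G x \<ge> 0" and y: "norm y \<le> 1"
  obtains P where "P \<in> sets M"
    and "\<And>E. E \<in> sets M \<Longrightarrow> E \<subseteq> P \<Longrightarrow> dual_measure G y E \<ge> 0"
    and "\<And>E. E \<in> sets M \<Longrightarrow> E \<inter> P = {} \<Longrightarrow> dual_measure G y E \<le> 0"
proof -
  define \<mu> where "\<mu> E = (\<integral>x. indicator E x * G x \<partial>M)" for E
  define a where "a E = \<mu> E + dual_measure G y E" for E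
  have \<mu>_nonneg: "\<mu> E \<ge> 0" for E
    unfolding \<mu>_def using G(2) by (intro integral_nonneg_AE) auto
  have \<mu>_sums: "(\<lambda>i. \<mu> (A i)) sums \<mu> (\<Union>i. A i)" if "range A \<subseteq> sets M" "disjoint_family A" for A
  proof -
    have int: "integrable M (\<lambda>x. indicator (A i) x * G x)" for i
      using that G(1) by (auto intro!: integrable_indicator_times)
    have "(\<lambda>n. \<bar>\<mu> (\<Union>i. A i) - (\<Sum>i<n. \<mu> (A i))\<bar>) \<longlonglongrightarrow> 0"
    proof (rule Lim_null_comparison[OF always_eventually indicator_times_partial_sums_L1[OF G that]])
      show "\<forall>n. norm \<bar>\<mu> (\<Union>i. A i) - (\<Sum>i<n. \<mu> (A i))\<bar> \<le>
          (\<integral>x. \<bar>indicator (\<Union>i. A i) x * G x - (\<Sum>i<n. indicator (A i) x * G x)\<bar> \<partial>M)"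
      proof
        fix n
        have "integrable M (\<lambda>x. indicator (\<Union>i. A i) x * G x)"
          using that G(1) by (intro integrable_indicator_times) auto
        moreover have "integrable M (\<lambda>x. \<Sum>i<n. indicator (A i) x * G x)"
          using int by (intro Bochner_Integration.integrable_sum) blast
        ultimately have "\<mu> (\<Union>i. A i) - (\<Sum>i<n. \<mu> (A i)) =
            (\<integral>x. indicator (\<Union>i. A i) x * G x - (\<Sum>i<n. indicator (A i) x * G x) \<partial>M)"
          unfolding \<mu>_def Bochner_Integration.integral_sum[symmetric, OF int]
          by (rule Bochner_Integration.integral_diff[symmetric])
        then show "norm \<bar>\<mu> (\<Union>i. A i) - (\<Sum>i<n. \<mu> (A i))\<bar> \<le>
            (\<integral>x. \<bar>indicator (\<Union>i. A i) x * G x - (\<Sum>i<n. indicator (A i) x * G x)\<bar> \<partial>M)"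
          by (simp add: integral_abs_bound)
      qed
    qed
    then have "(\<lambda>n. \<mu> (\<Union>i. A i) - (\<mu> (\<Union>i. A i) - (\<Sum>i<n. \<mu> (A i)))) \<longlonglongrightarrow> \<mu> (\<Union>i. A i) - 0"
      by (intro tendsto_diff tendsto_const) (simp add: tendsto_rabs_zero_iff)
    then show ?thesis
      by (simp add: sums_def)
  qed
  have a_nonneg: "a E \<ge> 0" if "E \<in> sets M" for E
    using abs_dual_measure_le[OF G y that] by (simp add: a_def \<mu>_def)
  have empty: "\<mu> {} = 0" "a {} = 0"
    by (simp_all add: a_def \<mu>_def dual_measure_def dual_of_zero)
  have a_sums: "(\<lambda>i. a (A i)) sums a (\<Union>i. A i)" if "range A \<subseteq> sets M" "disjoint_family A" for A
    unfolding a_def using \<mu>_sums[OF that] dual_measure_sums[OF G that] by (rule sums_add)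
  obtain N1 where N1: "finite_measure N1" "sets N1 = sets M" "\<And>E. E \<in> sets M \<Longrightarrow> emeasure N1 E = ennreal (a E)"
    using finite_measure_of_sums[of M a, OF a_nonneg empty(2) a_sums] by blast
  obtain N2 where N2: "finite_measure N2" "sets N2 = sets M" "\<And>E. E \<in> sets M \<Longrightarrow> emeasure N2 E = ennreal (\<mu> E)"
    using finite_measure_of_sums[of M \<mu>, OF \<mu>_nonneg empty(1) \<mu>_sums] by blast
  obtain P where P: "P \<in> sets N1" "\<forall>X\<in>sets N1. X \<subseteq> P \<longrightarrow> N2 X \<le> N1 X"
    "\<forall>X\<in>sets N1. X \<inter> P = {} \<longrightarrow> N1 X \<le> N2 X"
    using finite_unsigned_Hahn_decomposition[OF N1(1) N2(1)] N1(2) N2(2) by metis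
  show ?thesis
  proof (rule that)
    show "P \<in> sets M"
      using P(1) N1(2) by simp
    show "dual_measure G y E \<ge> 0" if "E \<in> sets M" "E \<subseteq> P" for E
      using P(2) that N1 N2 \<mu>_nonneg a_nonneg[OF that(1)] by (auto simp: a_def)
    show "dual_measure G y E \<le> 0" if "E \<in> sets M" "E \<inter> P = {}" for E
      using P(3) that N1 N2 \<mu>_nonneg a_nonneg[OF that(1)] by (auto simp: a_def)
  qed
qed

lemma dual_measure_Hahn_decompositions:
  assumes G: "integrable M G" "\<And>x. G x \<ge> 0" and y: "\<And>j. norm (y j) \<le> 1"
  obtains P where "\<And>j. P j \<in> sets M"
    and "\<And>j E. E \<in> sets M \<Longrightarrow> E \<subseteq> P j \<Longrightarrow> dual_measure G (y j) E \<ge> 0"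
    and "\<And>j E. E \<in> sets M \<Longrightarrow> E \<inter> P j = {} \<Longrightarrow> dual_measure G (y j) E \<le> 0"
proof -
  define hahn where "hahn j P \<longleftrightarrow> P \<in> sets M \<and> (\<forall>E\<in>sets M. E \<subseteq> P \<longrightarrow> dual_measure G (y j) E \<ge> 0)
      \<and> (\<forall>E\<in>sets M. E \<inter> P = {} \<longrightarrow> dual_measure G (y j) E \<le> 0)" for j P
  have "\<exists>P. hahn j P" for j
    by (rule dual_measure_Hahn_decomposition[OF G y[of j]]) (auto simp: hahn_def)
  define P where "P j = (SOME P. hahn j P)" for j
  have "hahn j (P j)" for j
    unfolding P_def using \<open>\<exists>P. hahn j P\<close> by (rule someI_ex)
  then have "P j \<in> sets M"
    and "\<And>E. E \<in> sets M \<Longrightarrow> E \<subseteq> P j \<Longrightarrow> dual_measure G (y j) E \<ge> 0"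
    and "\<And>E. E \<in> sets M \<Longrightarrow> E \<inter> P j = {} \<Longrightarrow> dual_measure G (y j) E \<le> 0" for j
    unfolding hahn_def by simp_all
  then show ?thesis
    by (rule that)
qed

text \<open>Discretize q / G with mesh 1 / K: the resulting step function is a nonnegative combination of
  functions indicator F * G with F \<subseteq> E, on which y is nonnegative, and it is within G / K of q.\<close>

lemma dual_of_nonneg_on_positive_set_approx:
  assumes G: "integrable M G" "\<And>x. G x \<ge> 0" and E: "E \<in> sets M" and y: "norm y \<le> 1"
    and positive: "\<And>F. F \<in> sets M \<Longrightarrow> F \<subseteq> E \<Longrightarrow> dual_measure G y F \<ge> 0"
    and q: "q \<in> borel_measurable M" "\<And>x. 0 \<le> q x" "\<And>x. q x \<le> C * G x"
    and K: "K \<ge> 1"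
  shows "blinfun_apply (dual_of (\<lambda>x. indicator E x * q x)) y \<ge> - (\<integral>x. G x \<partial>M) / real K"
proof -
  have [measurable]: "G \<in> borel_measurable M" "q \<in> borel_measurable M" "E \<in> sets M"
    using G q E by auto
  have qI: "integrable M q"
    by (rule Bochner_Integration.integrable_bound[of _ "\<lambda>x. C * G x"])
      (use G q in \<open>auto intro!: AE_I2 intro: order_trans[OF _ abs_ge_self]\<close>)
  define r where "r x = real K * q x / G x" for x
  define s where "s x = nat \<lfloor>r x\<rfloor>" for x
  define Nb where "Nb = nat \<lceil>real K * max C 0\<rceil>"
  define L where "L m = {x \<in> space M. real m \<le> r x \<and> r x < real m + 1}" for m :: nat
  note approx = floor_quotient_approx[OF K G(2) q(2,3), folded r_def s_def Nb_def]
  have L_sets: "E \<inter> L m \<in> sets M" for m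
    unfolding L_def r_def by measurable
  have L_iff: "x \<in> L m \<longleftrightarrow> m = s x" if "x \<in> space M" for x m
  proof -
    have "r x \<ge> 0"
      unfolding r_def using G(2) q(2) by simp
    have "(real m \<le> r x \<and> r x < real m + 1) \<longleftrightarrow> \<lfloor>r x\<rfloor> = int m"
      by (simp add: floor_eq_iff)
    also have "\<dots> \<longleftrightarrow> m = s x"
      unfolding s_def using \<open>r x \<ge> 0\<close> by auto
    finally have "(real m \<le> r x \<and> r x < real m + 1) \<longleftrightarrow> m = s x" .
    then show ?thesis
      unfolding L_def using that by simp
  qed
  define step where "step x = (\<Sum>m\<le>Nb. (real m / real K) * (indicator (E \<inter> L m) x * G x))" for x
  have int: "integrable M (\<lambda>x. indicator (E \<inter> L m) x * G x)" for m
    using L_sets G(1) by (rule integrable_indicator_times)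
  have step_I: "integrable M step"
    unfolding step_def using int by auto
  have step_eq: "step x = indicator E x * (real (s x) / real K * G x)" if "x \<in> space M" for x
  proof -
    have "step x = (\<Sum>m\<le>Nb. if m = s x then (real m / real K) * (indicator E x * G x) else 0)"
      unfolding step_def using L_iff[OF that] by (intro sum.cong) (auto simp: indicator_def)
    also have "\<dots> = indicator E x * (real (s x) / real K * G x)"
      using approx(1)[of x] by (simp add: sum.delta')
    finally show ?thesis .
  qed
  have "dual_of step = (\<Sum>m\<le>Nb. dual_of (\<lambda>x. (real m / real K) * (indicator (E \<inter> L m) x * G x)))"
    unfolding step_def by (rule dual_of_sum) (use int in auto)
  also have "\<dots> = (\<Sum>m\<le>Nb. (real m / real K) *\<^sub>R dual_of (\<lambda>x. indicator (E \<inter> L m) x * G x))"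
    by (intro sum.cong refl dual_of_scale int)
  finally have "blinfun_apply (dual_of step) y = (\<Sum>m\<le>Nb. (real m / real K) * dual_measure G y (E \<inter> L m))"
    unfolding dual_measure_def by (simp add: blinfun.sum_left blinfun.scaleR_left)
  also have "\<dots> \<ge> 0"
    using positive L_sets by (intro sum_nonneg mult_nonneg_nonneg) auto
  finally have step_nonneg: "blinfun_apply (dual_of step) y \<ge> 0" .
  have qE: "integrable M (\<lambda>x. indicator E x * q x)"
    using E qI by (rule integrable_indicator_times)
  have err: "\<bar>indicator E x * q x - step x\<bar> \<le> G x / real K" if "x \<in> space M" for x
    using approx(2,3)[of x] step_eq[OF that] by (auto simp: indicator_def)
  have "\<bar>blinfun_apply (dual_of (\<lambda>x. indicator E x * q x - step x)) y\<bar> \<le> (\<integral>x. \<bar>indicator E x * q x - step x\<bar> \<partial>M)"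
    using qE step_I y by (intro dual_of_apply_le) auto
  also have "\<dots> \<le> (\<integral>x. G x / real K \<partial>M)"
    using err qE step_I G(1) by (intro integral_mono) auto
  finally have "\<bar>blinfun_apply (dual_of (\<lambda>x. indicator E x * q x)) y - blinfun_apply (dual_of step) y\<bar>
      \<le> (\<integral>x. G x \<partial>M) / real K"
    by (simp add: dual_of_diff[OF qE step_I] blinfun.diff_left)
  with step_nonneg show ?thesis
    by linarith
qed

lemma dual_of_nonneg_on_positive_set:
  assumes G: "integrable M G" "\<And>x. G x \<ge> 0" and E: "E \<in> sets M" and y: "norm y \<le> 1"
    and positive: "\<And>F. F \<in> sets M \<Longrightarrow> F \<subseteq> E \<Longrightarrow> dual_measure G y F \<ge> 0"
    and q: "q \<in> borel_measurable M" "\<And>x. 0 \<le> q x" "\<And>x. q x \<le> C * G x"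
  shows "blinfun_apply (dual_of (\<lambda>x. indicator E x * q x)) y \<ge> 0"
  using dual_of_nonneg_on_positive_set_approx[OF G E y positive q] by (rule nonneg_of_inverse_bounds)

text \<open>For q \<ge> 0 the integral of q is the norm of dual_of q, so this says that v almost norms it.\<close>

definition almost_norming :: "'a \<Rightarrow> real \<Rightarrow> ('m \<Rightarrow> real) \<Rightarrow> bool" where
  "almost_norming v \<kappa> q \<longleftrightarrow> blinfun_apply (dual_of q) v \<ge> (\<integral>x. q x \<partial>M) - \<kappa>"

lemma dual_of_apply_le_integral:
  assumes "integrable M q" "\<And>x. q x \<ge> 0" "norm v \<le> 1"
  shows "blinfun_apply (dual_of q) v \<le> (\<integral>x. q x \<partial>M)"
  using dual_of_apply_le[OF assms(1,3)] assms(2) by simp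

lemma dual_of_indicator_split:
  assumes "integrable M q" "E \<in> sets M"
  shows "dual_of q = dual_of (\<lambda>x. indicator E x * q x) + dual_of (\<lambda>x. indicator (space M - E) x * q x)"
proof -
  have "dual_of q = dual_of (\<lambda>x. indicator E x * q x + indicator (space M - E) x * q x)"
    by (rule dual_of_cong) (auto simp: indicator_def intro!: AE_I2)
  also have "\<dots> = dual_of (\<lambda>x. indicator E x * q x) + dual_of (\<lambda>x. indicator (space M - E) x * q x)"
    using assms by (intro dual_of_add integrable_indicator_times) auto
  finally show ?thesis .
qed

lemma almost_norming_restrict:
  assumes q: "integrable M q" "\<And>x. q x \<ge> 0" and v: "norm v \<le> 1" and E: "E \<in> sets M"
    and "almost_norming v \<kappa> q"
  shows "almost_norming v \<kappa> (\<lambda>x. indicator E x * q x)"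
proof -
  have "blinfun_apply (dual_of (\<lambda>x. indicator (space M - E) x * q x)) v
      \<le> (\<integral>x. indicator (space M - E) x * q x \<partial>M)"
    using E q v by (intro dual_of_apply_le_integral integrable_indicator_times) auto
  then show ?thesis
    using assms(5) integral_indicator_split[OF q(1) E] dual_of_indicator_split[OF q(1) E]
    by (simp add: almost_norming_def blinfun.add_left)
qed

lemma almost_norming_mass_bound:
  assumes G: "integrable M G" "\<And>x. G x \<ge> 0" and Q: "Q \<in> sets M" and v: "norm v \<le> 1"
    and nonpos: "\<And>F. F \<in> sets M \<Longrightarrow> F \<subseteq> Q \<Longrightarrow> dual_measure G v F \<le> 0"
    and q: "q \<in> borel_measurable M" "\<And>x. 0 \<le> q x" "\<And>x. q x \<le> C * G x"
    and "almost_norming v \<kappa> q"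
  shows "(\<integral>x. indicator Q x * q x \<partial>M) \<le> \<kappa>"
proof -
  have qI: "integrable M q"
    by (rule Bochner_Integration.integrable_bound[of _ "\<lambda>x. C * G x"])
      (use G q in \<open>auto intro!: AE_I2 intro: order_trans[OF _ abs_ge_self]\<close>)
  have "dual_measure G (- v) F \<ge> 0" if "F \<in> sets M" "F \<subseteq> Q" for F
    using nonpos[OF that] by (simp add: dual_measure_def blinfun.minus_right)
  then have "blinfun_apply (dual_of (\<lambda>x. indicator Q x * q x)) (- v) \<ge> 0"
    using v by (intro dual_of_nonneg_on_positive_set[OF G Q _ _ q]) auto
  moreover have "blinfun_apply (dual_of (\<lambda>x. indicator (space M - Q) x * q x)) v
      \<le> (\<integral>x. indicator (space M - Q) x * q x \<partial>M)"
    using Q qI q(2) v by (intro dual_of_apply_le_integral integrable_indicator_times) auto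
  ultimately show ?thesis
    using assms(9) integral_indicator_split[OF qI Q] dual_of_indicator_split[OF qI Q]
    by (simp add: almost_norming_def blinfun.add_left blinfun.minus_right)
qed

lemma almost_norming_pos_neg_parts:
  assumes h: "integrable M h" "(\<integral>x. \<bar>h x\<bar> \<partial>M) \<le> 1" and v: "norm v \<le> 1"
    and norming: "blinfun_apply (dual_of h) v \<ge> 1 - \<kappa>"
  shows "almost_norming v \<kappa> (\<lambda>x. max (h x) 0)" and "almost_norming (- v) \<kappa> (\<lambda>x. max (- h x) 0)"
proof -
  define hp where "hp x = max (h x) 0" for x
  define hn where "hn x = max (- h x) 0" for x
  have I: "integrable M hp" "integrable M hn"
    unfolding hp_def hn_def using h(1) by (auto intro!: integrable_max)
  have "h = (\<lambda>x. hp x - hn x)"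
    by (auto simp: hp_def hn_def)
  then have "dual_of h = dual_of hp - dual_of hn"
    using dual_of_diff[OF I] by simp
  then have split: "blinfun_apply (dual_of h) v = blinfun_apply (dual_of hp) v + blinfun_apply (dual_of hn) (- v)"
    by (simp add: blinfun.diff_left blinfun.minus_right)
  have "(\<integral>x. \<bar>h x\<bar> \<partial>M) = (\<integral>x. hp x + hn x \<partial>M)"
    by (intro Bochner_Integration.integral_cong) (auto simp: hp_def hn_def)
  with h(2) I have total: "(\<integral>x. hp x \<partial>M) + (\<integral>x. hn x \<partial>M) \<le> 1"
    by simp
  have "blinfun_apply (dual_of hp) v \<le> (\<integral>x. hp x \<partial>M)" "blinfun_apply (dual_of hn) (- v) \<le> (\<integral>x. hn x \<partial>M)"
    using I v by (auto intro!: dual_of_apply_le_integral) (auto simp: hp_def hn_def)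
  with split total norming show "almost_norming v \<kappa> (\<lambda>x. max (h x) 0)" "almost_norming (- v) \<kappa> (\<lambda>x. max (- h x) 0)"
    unfolding almost_norming_def hp_def[symmetric] hn_def[symmetric] by linarith+
qed

lemma dual_measure_uminus: "dual_measure G (- v) F = - dual_measure G v F"
  by (simp add: dual_measure_def blinfun.minus_right)

lemma sign_pattern_mass_bounds:
  assumes G: "integrable M G" "\<And>x. G x \<ge> 0" and P: "\<And>j. P j \<in> sets M"
    and P_pos: "\<And>j F. F \<in> sets M \<Longrightarrow> F \<subseteq> P j \<Longrightarrow> dual_measure G (y j) F \<ge> 0"
    and P_neg: "\<And>j F. F \<in> sets M \<Longrightarrow> F \<inter> P j = {} \<Longrightarrow> dual_measure G (y j) F \<le> 0"
    and y: "\<And>j. norm (y j) = 1" and "\<beta> \<ge> 0"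
    and h: "integrable M h" "(\<integral>x. \<bar>h x\<bar> \<partial>M) \<le> 1" "\<And>x. \<bar>h x\<bar> \<le> C * G x"
    and before: "\<And>j. j < n \<Longrightarrow> blinfun_apply (dual_of h) (- y j) \<ge> 1 - \<beta> * (1/2) ^ j"
    and now: "blinfun_apply (dual_of h) (y n) \<ge> 1 - \<beta> * (1/2) ^ n"
  shows "(\<integral>x. indicator (space M - disjointed P n) x * max (h x) 0 \<partial>M) \<le> 2 * \<beta>"
    and "(\<integral>x. indicator (space M - disjointed (\<lambda>j. space M - P j) n) x * max (- h x) 0 \<partial>M) \<le> 2 * \<beta>"
proof -
  define hp where "hp x = max (h x) 0" for x
  define hn where "hn x = max (- h x) 0" for x
  have [measurable]: "h \<in> borel_measurable M"
    using h(1) by (rule borel_measurable_integrable)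
  have meas: "hp \<in> borel_measurable M" "hn \<in> borel_measurable M"
    unfolding hp_def hn_def by measurable
  have nonneg: "hp x \<ge> 0" "hn x \<ge> 0" for x
    unfolding hp_def hn_def by auto
  have dominated: "hp x \<le> C * G x" "hn x \<le> C * G x" for x
    unfolding hp_def hn_def using h(3)[of x] by auto
  have I: "integrable M hp" "integrable M hn"
    unfolding hp_def hn_def using h(1) by (auto intro!: integrable_max)
  have y_le: "norm (y j) \<le> 1" "norm (- y j) \<le> 1" for j
    using y[of j] by auto
  have P_compl: "space M - (space M - P j) = P j" for j
    using sets.sets_into_space[OF P] by blast
  note parts = almost_norming_pos_neg_parts[OF h(1,2)]
  note mass_p = almost_norming_mass_bound[OF G _ _ _ meas(1) nonneg(1) dominated(1)]
  note mass_n = almost_norming_mass_bound[OF G _ _ _ meas(2) nonneg(2) dominated(2)]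
  have "(\<integral>x. indicator (P j) x * hp x \<partial>M) \<le> \<beta> * (1/2) ^ j" if "j < n" for j
    using parts(1)[OF y_le(2) before[OF that]] P_pos
    by (intro mass_p[OF P y_le(2)]) (auto simp: dual_measure_uminus hp_def)
  moreover have "(\<integral>x. indicator (space M - P n) x * hp x \<partial>M) \<le> \<beta> * (1/2) ^ n"
    using parts(1)[OF y_le(1) now] P_neg P
    by (intro mass_p[OF _ y_le(1)]) (auto simp: hp_def)
  ultimately show "(\<integral>x. indicator (space M - disjointed P n) x * max (h x) 0 \<partial>M) \<le> 2 * \<beta>"
    unfolding hp_def[symmetric] using P I(1) nonneg(1) \<open>\<beta> \<ge> 0\<close>
    by (intro integral_outside_disjointed_geometric) auto
  have "(\<integral>x. indicator (space M - P j) x * hn x \<partial>M) \<le> \<beta> * (1/2) ^ j" if "j < n" for j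
    using parts(2)[OF y_le(2) before[OF that]] P_neg P
    by (intro mass_n[OF _ y_le(1)]) (auto simp: hn_def)
  moreover have "(\<integral>x. indicator (space M - (space M - P n)) x * hn x \<partial>M) \<le> \<beta> * (1/2) ^ n"
    using parts(2)[OF y_le(1) now] P_pos P
    unfolding P_compl by (intro mass_n[OF P y_le(2)]) (auto simp: dual_measure_uminus hn_def)
  ultimately show "(\<integral>x. indicator (space M - disjointed (\<lambda>j. space M - P j) n) x * max (- h x) 0 \<partial>M) \<le> 2 * \<beta>"
    unfolding hn_def[symmetric] using P I(2) nonneg(2) \<open>\<beta> \<ge> 0\<close>
    by (intro integral_outside_disjointed_geometric) auto
qed

lemma sign_pattern_density:
  assumes G: "integrable M G" "\<And>x. G x \<ge> 0" and P: "\<And>j. P j \<in> sets M"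
    and P_pos: "\<And>j F. F \<in> sets M \<Longrightarrow> F \<subseteq> P j \<Longrightarrow> dual_measure G (y j) F \<ge> 0"
    and P_neg: "\<And>j F. F \<in> sets M \<Longrightarrow> F \<inter> P j = {} \<Longrightarrow> dual_measure G (y j) F \<le> 0"
    and y: "\<And>j. norm (y j) = 1" and \<beta>: "0 \<le> \<beta>" "\<beta> \<le> 1/10"
    and h: "integrable M h" "(\<integral>x. \<bar>h x\<bar> \<partial>M) \<le> 1" "\<And>x. \<bar>h x\<bar> \<le> C * G x"
    and x: "norm x = 1" "blinfun_apply (dual_of h) x \<ge> 1 - \<beta>"
    and before: "\<And>j. j < n \<Longrightarrow> blinfun_apply (dual_of h) (- y j) \<ge> 1 - \<beta> * (1/2) ^ j"
    and now: "blinfun_apply (dual_of h) (y n) \<ge> 1 - \<beta> * (1/2) ^ n"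
  defines "p \<equiv> \<lambda>x. indicator (disjointed P n) x * max (h x) 0
                  - indicator (disjointed (\<lambda>j. space M - P j) n) x * max (- h x) 0"
  shows "integrable M p" and "(\<integral>x. \<bar>p x\<bar> \<partial>M) \<ge> 1/2"
    and "blinfun_apply (dual_of p) x \<ge> (\<integral>x. \<bar>p x\<bar> \<partial>M) - 2 * \<beta>"
    and "\<And>\<omega>. sign_function P (space M) n \<omega> * p \<omega> = \<bar>p \<omega>\<bar>"
    and "\<And>\<omega>. \<omega> \<notin> disjointed P n \<union> disjointed (\<lambda>j. space M - P j) n \<Longrightarrow> p \<omega> = 0"
proof -
  define Dp where "Dp = disjointed P n"
  define Dn where "Dn = disjointed (\<lambda>j. space M - P j) n"
  define hp where "hp x = max (h x) 0" for x
  define hn where "hn x = max (- h x) 0" for x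
  have D: "Dp \<in> sets M" "Dn \<in> sets M"
    unfolding Dp_def Dn_def using sets.range_disjointed_sets[of P M] 
      sets.range_disjointed_sets[of "\<lambda>j. space M - P j" M] P by auto
  have nonneg: "hp x \<ge> 0" "hn x \<ge> 0" for x
    unfolding hp_def hn_def by auto
  have I: "integrable M hp" "integrable M hn"
    unfolding hp_def hn_def using h(1) by (auto intro!: integrable_max)
  have Ip: "integrable M (\<lambda>x. indicator Dp x * hp x)" and In: "integrable M (\<lambda>x. indicator Dn x * hn x)"
    using D I by (auto intro: integrable_indicator_times)
  have p_eq: "p = (\<lambda>x. indicator Dp x * hp x - indicator Dn x * hn x)"
    unfolding p_def Dp_def Dn_def hp_def hn_def ..
  show "integrable M p"
    unfolding p_eq using Ip In by auto
  have "Dp \<inter> Dn = {}"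
    unfolding Dp_def Dn_def by (rule disjointed_complements_disjoint)
  then show "sign_function P (space M) n \<omega> * p \<omega> = \<bar>p \<omega>\<bar>"
    and "\<omega> \<notin> disjointed P n \<union> disjointed (\<lambda>j. space M - P j) n \<Longrightarrow> p \<omega> = 0" for \<omega>
    unfolding p_eq sign_function_def Dp_def[symmetric] Dn_def[symmetric] using nonneg[of \<omega>]
    by (auto simp: indicator_def)
  from \<open>Dp \<inter> Dn = {}\<close> have "\<bar>p x\<bar> = indicator Dp x * hp x + indicator Dn x * hn x" for x
    unfolding p_eq using nonneg[of x] by (auto simp: indicator_def)
  then have abs_p: "(\<integral>x. \<bar>p x\<bar> \<partial>M) = (\<integral>x. indicator Dp x * hp x \<partial>M) + (\<integral>x. indicator Dn x * hn x \<partial>M)"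
    using Ip In by simp
  have "(\<integral>x. \<bar>h x\<bar> \<partial>M) = (\<integral>x. hp x \<partial>M) + (\<integral>x. hn x \<partial>M)"
  proof -
    have "(\<integral>x. \<bar>h x\<bar> \<partial>M) = (\<integral>x. hp x + hn x \<partial>M)"
      by (intro Bochner_Integration.integral_cong) (auto simp: hp_def hn_def)
    then show ?thesis
      using I by simp
  qed
  moreover have "(\<integral>x. \<bar>h x\<bar> \<partial>M) \<ge> 1 - \<beta>"
    using dual_of_apply_le[OF h(1), of x] x by simp
  moreover note mass = sign_pattern_mass_bounds[where P = P and y = y and n = n, OF G P P_pos P_neg y \<beta>(1) h before now,
      folded Dp_def Dn_def hp_def hn_def]
  ultimately show "(\<integral>x. \<bar>p x\<bar> \<partial>M) \<ge> 1/2"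
    using abs_p integral_indicator_split[OF I(1) D(1)] integral_indicator_split[OF I(2) D(2)] \<beta>(2)
    by linarith
  note parts = almost_norming_pos_neg_parts[OF h(1,2) _ x(2)]
  have "almost_norming x \<beta> (\<lambda>x. indicator Dp x * hp x)" "almost_norming (- x) \<beta> (\<lambda>x. indicator Dn x * hn x)"
  proof -
    have "almost_norming x \<beta> hp" "almost_norming (- x) \<beta> hn"
      using parts x(1) by (simp_all add: hp_def[abs_def] hn_def[abs_def])
    then show "almost_norming x \<beta> (\<lambda>x. indicator Dp x * hp x)" "almost_norming (- x) \<beta> (\<lambda>x. indicator Dn x * hn x)"
      using x(1) D I nonneg by (auto intro!: almost_norming_restrict)
  qed
  moreover have "dual_of p = dual_of (\<lambda>x. indicator Dp x * hp x) - dual_of (\<lambda>x. indicator Dn x * hn x)"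
    unfolding p_eq using Ip In by (rule dual_of_diff)
  ultimately show "blinfun_apply (dual_of p) x \<ge> (\<integral>x. \<bar>p x\<bar> \<partial>M) - 2 * \<beta>"
    unfolding abs_p almost_norming_def by (simp add: blinfun.diff_left blinfun.minus_right)
qed

lemma norm_sum_bidual_of_le:
  fixes g :: "nat \<Rightarrow> 'm \<Rightarrow> real"
  assumes g: "\<And>m. g m \<in> borel_measurable M" and g_sum: "\<And>N \<omega>. (\<Sum>m\<le>N. \<bar>g m \<omega>\<bar>) \<le> 1"
  shows "norm (\<Sum>j\<le>n. c j *\<^sub>R bidual_of (g j)) \<le> Max ((\<lambda>j. \<bar>c j\<bar>) ` {..n})"
proof -
  define B where "B = Max ((\<lambda>j. \<bar>c j\<bar>) ` {..n})"
  have c_le: "\<bar>c j\<bar> \<le> B" if "j \<le> n" for j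
    unfolding B_def using that by (intro Max_ge finite_imageI) auto
  have g_le: "\<bar>g m \<omega>\<bar> \<le> 1" for m \<omega>
    using g_sum[where N=m and \<omega>=\<omega>] member_le_sum[of m "{..m}" "\<lambda>m. \<bar>g m \<omega>\<bar>"] by simp
  have bound: "\<bar>\<Sum>j\<le>n. c j * g j \<omega>\<bar> \<le> B" for \<omega>
  proof -
    have "\<bar>\<Sum>j\<le>n. c j * g j \<omega>\<bar> \<le> (\<Sum>j\<le>n. B * \<bar>g j \<omega>\<bar>)"
      using c_le by (intro order.trans[OF sum_abs] sum_mono) (auto simp: abs_mult intro: mult_right_mono)
    also have "\<dots> \<le> B"
      using g_sum[where N=n and \<omega>=\<omega>] c_le[of 0] by (simp add: sum_distrib_left[symmetric] mult_left_le)
    finally show ?thesis .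
  qed
  have "(\<lambda>\<omega>. \<Sum>j\<le>n. c j * g j \<omega>) \<in> borel_measurable M"
    using g by measurable
  then have "norm (bidual_of (\<lambda>\<omega>. \<Sum>j\<le>n. c j * g j \<omega>)) \<le> B"
    using bound by (rule norm_bidual_of_le)
  moreover have "(\<Sum>j\<le>n. c j *\<^sub>R bidual_of (g j)) = bidual_of (\<lambda>\<omega>. \<Sum>j\<le>n. c j * g j \<omega>)"
    by (rule bidual_of_sum[OF _ g g_le]) simp
  ultimately show ?thesis
    unfolding B_def by simp
qed

lemma dominated_sign_pattern_densities:
  assumes oct: "octahedral TYPE('a)" and fin: "finite A" and sph: "A \<subseteq> sphere 0 1" and \<beta>: "\<beta> > 0"
  defines "y \<equiv> octahedral_seq A (octahedral_tolerance \<beta>)"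
  obtains G h where "integrable M G" "\<And>\<omega>. G \<omega> \<ge> 0"
    and "\<And>n x. x \<in> A \<Longrightarrow> integrable M (h n x)"
    and "\<And>n x. x \<in> A \<Longrightarrow> (\<integral>\<omega>. \<bar>h n x \<omega>\<bar> \<partial>M) \<le> 1"
    and "\<And>n x \<omega>. x \<in> A \<Longrightarrow> \<bar>h n x \<omega>\<bar> \<le> 2 ^ n * G \<omega>"
    and "\<And>n x. x \<in> A \<Longrightarrow> blinfun_apply (dual_of (h n x)) x \<ge> 1 - \<beta>"
    and "\<And>n x j. x \<in> A \<Longrightarrow> j < n \<Longrightarrow> blinfun_apply (dual_of (h n x)) (- y j) \<ge> 1 - \<beta> * (1/2) ^ j"
    and "\<And>n x. x \<in> A \<Longrightarrow> blinfun_apply (dual_of (h n x)) (y n) \<ge> 1 - \<beta> * (1/2) ^ n"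
proof -
  define w where "w n x = x + (\<Sum>j\<le>n. sign_pattern n j *\<^sub>R y j)" for n x
  define F where "F n x = (SOME F::'a \<Rightarrow>\<^sub>L real. norm F \<le> 1 \<and> blinfun_apply F (w n x) = norm (w n x))" for n x
  have F: "norm (F n x) \<le> 1 \<and> blinfun_apply (F n x) (w n x) = norm (w n x)" for n x
    unfolding F_def by (rule someI_ex[OF exists_norming_functional])
  obtain G Z where G: "integrable M G" "\<And>\<omega>. G \<omega> \<ge> 0" and Z: "Z \<in> sets M" "AE \<omega> in M. \<omega> \<notin> Z"
    and dominated: "\<And>n x \<omega>. x \<in> A \<Longrightarrow> \<omega> \<in> space M - Z \<Longrightarrow> \<bar>T (F n x) \<omega>\<bar> \<le> 2 ^ n * G \<omega>"
    using exists_integrable_dominant[OF fin, of M "\<lambda>n x. T (F n x)"] integrable_T norm_eq_integral_T F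
    by metis
  have [measurable]: "Z \<in> sets M"
    by (fact Z(1))
  define h where "h n x \<omega> = indicator (space M - Z) \<omega> * T (F n x) \<omega>" for n x \<omega>
  have h_AE: "AE \<omega> in M. h n x \<omega> = T (F n x) \<omega>" for n x
    using Z(2) by (rule AE_mp) (auto intro!: AE_I2 simp: h_def indicator_def)
  have dual_of_h: "dual_of (h n x) = F n x" for n x
    using dual_of_cong[OF h_AE] dual_of_T by simp
  show ?thesis
  proof (rule that[OF G, of h])
    show "integrable M (h n x)" for n x
      unfolding h_def using Z(1) integrable_T by (intro integrable_indicator_times) auto
    show "(\<integral>\<omega>. \<bar>h n x \<omega>\<bar> \<partial>M) \<le> 1" for n x
    proof -
      have "(\<integral>\<omega>. \<bar>h n x \<omega>\<bar> \<partial>M) = (\<integral>\<omega>. \<bar>T (F n x) \<omega>\<bar> \<partial>M)"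
        using h_AE[of n x] by (intro integral_cong_AE) (auto simp: h_def elim: AE_mp)
      then show ?thesis
        using norm_eq_integral_T[of "F n x"] F[of n x] by simp
    qed
    show "\<bar>h n x \<omega>\<bar> \<le> 2 ^ n * G \<omega>" if "x \<in> A" for n x \<omega>
      using dominated[OF that, of \<omega> n] G(2)[of \<omega>] by (auto simp: h_def indicator_def)
    fix n x assume "x \<in> A"
    have "norm (F n x) \<le> 1"
      and norming: "blinfun_apply (F n x) (x + (\<Sum>j\<le>n. sign_pattern n j *\<^sub>R y j)) =
        norm (x + (\<Sum>j\<le>n. sign_pattern n j *\<^sub>R y j))"
      using F[of n x] unfolding w_def by auto
    note estimates = norming_functional_of_sign_pattern[OF oct fin sph \<beta> \<open>x \<in> A\<close> \<open>norm (F n x) \<le> 1\<close>,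
        folded y_def, OF norming]
    show "blinfun_apply (dual_of (h n x)) x \<ge> 1 - \<beta>"
      "\<And>j. j < n \<Longrightarrow> blinfun_apply (dual_of (h n x)) (- y j) \<ge> 1 - \<beta> * (1/2) ^ j"
      "blinfun_apply (dual_of (h n x)) (y n) \<ge> 1 - \<beta> * (1/2) ^ n"
      using estimates unfolding dual_of_h by auto
  qed
qed

lemma isometric_c0_basis_of_sign_densities:
  fixes g :: "nat \<Rightarrow> 'm \<Rightarrow> real"
  assumes g: "\<And>m. g m \<in> borel_measurable M" "\<And>N \<omega>. (\<Sum>m\<le>N. \<bar>g m \<omega>\<bar>) \<le> 1"
    and p: "\<And>k x. x \<in> A \<Longrightarrow> integrable M (p k x)" "\<And>k x. x \<in> A \<Longrightarrow> (\<integral>\<omega>. \<bar>p k x \<omega>\<bar> \<partial>M) > 0"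
    and sign: "\<And>k x \<omega>. x \<in> A \<Longrightarrow> g k \<omega> * p k x \<omega> = \<bar>p k x \<omega>\<bar>"
    and orth: "\<And>m k x \<omega>. x \<in> A \<Longrightarrow> m \<noteq> k \<Longrightarrow> g m \<omega> * p k x \<omega> = 0"
    and near: "\<And>k x. x \<in> A \<Longrightarrow> blinfun_apply (dual_of (p k x)) x \<ge> (1 - \<delta>) * (\<integral>\<omega>. \<bar>p k x \<omega>\<bar> \<partial>M)"
    and "x0 \<in> A" and "\<And>x. x \<in> A \<Longrightarrow> - x \<in> A"
  shows "isometric_c0_basis (\<lambda>m. bidual_of (g m))"
    and "\<And>x v. x \<in> A \<Longrightarrow> v \<in> closure (span (range (\<lambda>m. bidual_of (g m)))) \<Longrightarrow>
           norm (canon x + v) \<ge> 1 - \<delta> + norm v"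
proof -
  define I where "I k x = (\<integral>\<omega>. \<bar>p k x \<omega>\<bar> \<partial>M)" for k x
  define F where "F k x = (1 / I k x) *\<^sub>R dual_of (p k x)" for k x
  have g_le: "\<bar>g m \<omega>\<bar> \<le> 1" for m \<omega>
    using g(2)[where N=m and \<omega>=\<omega>] member_le_sum[of m "{..m}" "\<lambda>m. \<bar>g m \<omega>\<bar>"] by simp
  have biorth: "blinfun_apply (bidual_of (g m)) (F k x) = (if m = k then 1 else 0)" if x: "x \<in> A" for m k x
  proof -
    have "blinfun_apply (bidual_of (g m)) (F k x) = (\<integral>\<omega>. g m \<omega> * p k x \<omega> \<partial>M) / I k x"
      unfolding F_def using bidual_of_dual_of[OF g(1) g_le p(1)[OF x]] by (simp add: blinfun.scaleR_right)
    also have "\<dots> = (if m = k then 1 else 0)"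
    proof (cases "m = k")
      case True
      then show ?thesis
        using sign[OF x] p(2)[OF x, of k] by (simp add: I_def)
    next
      case False
      then have "(\<lambda>\<omega>. g m \<omega> * p k x \<omega>) = (\<lambda>\<omega>. 0)"
        using orth[OF x] by auto
      with False show ?thesis
        by simp
    qed
    finally show ?thesis .
  qed
  have norm_F: "norm (F k x) = 1" if "x \<in> A" for k x
    using p(1)[OF that, of k] p(2)[OF that, of k] by (simp add: F_def I_def norm_dual_of)
  have F_x: "blinfun_apply (F k x) x \<ge> 1 - \<delta>" if "x \<in> A" for k x
  proof -
    have "blinfun_apply (F k x) x = blinfun_apply (dual_of (p k x)) x / I k x"
      by (simp add: F_def blinfun.scaleR_left)
    then show ?thesis
      using near[OF that, of k] p(2)[OF that, of k] by (simp add: I_def le_divide_eq)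
  qed
  show "isometric_c0_basis (\<lambda>m. bidual_of (g m))"
    and "\<And>x v. x \<in> A \<Longrightarrow> v \<in> closure (span (range (\<lambda>m. bidual_of (g m)))) \<Longrightarrow>
           norm (canon x + v) \<ge> 1 - \<delta> + norm v"
    using isometric_c0_basis_of_biorthogonal[OF norm_sum_bidual_of_le[OF g] norm_F biorth F_x assms(8,9)]
    by blast+
qed

text \<open>The patterns are used from n = 1 on: the sign sets of two different patterns n, n' \<ge> 1 are
  disjoint, whereas the negative set of pattern 0 is not.\<close>

lemma exists_isometric_c0_basis_near:
  fixes A :: "'a set"
  assumes oct: "octahedral TYPE('a)" and fin: "finite A" and sph: "A \<subseteq> sphere 0 1"
    and "x0 \<in> A" and A_sym: "\<And>x. x \<in> A \<Longrightarrow> - x \<in> A" and \<beta>: "0 < \<beta>" "\<beta> \<le> 1/10"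
  obtains u where "isometric_c0_basis u"
    and "\<And>x v. x \<in> A \<Longrightarrow> v \<in> closure (span (range u)) \<Longrightarrow> norm (canon x + v) \<ge> 1 - 4 * \<beta> + norm v"
proof -
  define y where "y = octahedral_seq A (octahedral_tolerance \<beta>)"
  have y: "norm (y j) = 1" for j
    unfolding y_def by (rule octahedral_seq(1)[OF oct fin octahedral_tolerance_pos[OF \<beta>(1)]])
  obtain G h where G: "integrable M G" "\<And>\<omega>. G \<omega> \<ge> 0"
    and h: "\<And>n x. x \<in> A \<Longrightarrow> integrable M (h n x)"
      "\<And>n x. x \<in> A \<Longrightarrow> (\<integral>\<omega>. \<bar>h n x \<omega>\<bar> \<partial>M) \<le> 1"
      "\<And>n x \<omega>. x \<in> A \<Longrightarrow> \<bar>h n x \<omega>\<bar> \<le> 2 ^ n * G \<omega>"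
    and norming: "\<And>n x. x \<in> A \<Longrightarrow> blinfun_apply (dual_of (h n x)) x \<ge> 1 - \<beta>"
      "\<And>n x j. x \<in> A \<Longrightarrow> j < n \<Longrightarrow> blinfun_apply (dual_of (h n x)) (- y j) \<ge> 1 - \<beta> * (1/2) ^ j"
      "\<And>n x. x \<in> A \<Longrightarrow> blinfun_apply (dual_of (h n x)) (y n) \<ge> 1 - \<beta> * (1/2) ^ n"
    by (rule dominated_sign_pattern_densities[OF oct fin sph \<beta>(1), folded y_def]) blast
  obtain P where P: "\<And>j. P j \<in> sets M"
    and P_pos: "\<And>j F. F \<in> sets M \<Longrightarrow> F \<subseteq> P j \<Longrightarrow> dual_measure G (y j) F \<ge> 0"
    and P_neg: "\<And>j F. F \<in> sets M \<Longrightarrow> F \<inter> P j = {} \<Longrightarrow> dual_measure G (y j) F \<le> 0"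
  proof -
    have "norm (y j) \<le> 1" for j
      using y[of j] by simp
    then show ?thesis
      by (rule dual_measure_Hahn_decompositions[OF G]) (rule that)
  qed
  define p where "p n x \<omega> = indicator (disjointed P n) \<omega> * max (h n x \<omega>) 0
      - indicator (disjointed (\<lambda>j. space M - P j) n) \<omega> * max (- h n x \<omega>) 0" for n x \<omega>
  define g where "g k = sign_function P (space M) (Suc k)" for k
  have density: "integrable M (p n x)" "(\<integral>\<omega>. \<bar>p n x \<omega>\<bar> \<partial>M) \<ge> 1/2"
    "blinfun_apply (dual_of (p n x)) x \<ge> (\<integral>\<omega>. \<bar>p n x \<omega>\<bar> \<partial>M) - 2 * \<beta>"
    "\<And>\<omega>. sign_function P (space M) n \<omega> * p n x \<omega> = \<bar>p n x \<omega>\<bar>"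
    "\<And>\<omega>. \<omega> \<notin> disjointed P n \<union> disjointed (\<lambda>j. space M - P j) n \<Longrightarrow> p n x \<omega> = 0"
    if x: "x \<in> A" for n x
  proof -
    have "norm x = 1"
      using x sph by auto
    note d = sign_pattern_density[where P = P and y = y and n = n, OF G P P_pos P_neg y less_imp_le[OF \<beta>(1)]
        \<beta>(2) h[OF x] this norming[OF x], folded p_def]
    show "integrable M (p n x)" "(\<integral>\<omega>. \<bar>p n x \<omega>\<bar> \<partial>M) \<ge> 1/2"
      "blinfun_apply (dual_of (p n x)) x \<ge> (\<integral>\<omega>. \<bar>p n x \<omega>\<bar> \<partial>M) - 2 * \<beta>"
      "\<And>\<omega>. sign_function P (space M) n \<omega> * p n x \<omega> = \<bar>p n x \<omega>\<bar>"
      "\<And>\<omega>. \<omega> \<notin> disjointed P n \<union> disjointed (\<lambda>j. space M - P j) n \<Longrightarrow> p n x \<omega> = 0"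
      using d by blast+
  qed
  have orth: "g m \<omega> * p (Suc k) x \<omega> = 0" if "x \<in> A" "m \<noteq> k" for m k x \<omega>
  proof (cases "\<omega> \<in> disjointed P (Suc k) \<union> disjointed (\<lambda>j. space M - P j) (Suc k)")
    case True
    then have "g m \<omega> = 0"
      unfolding g_def using that(2) by (intro sign_function_eq_0) auto
    then show ?thesis
      by simp
  next
    case False
    then show ?thesis
      using density(5)[OF that(1)] by simp
  qed
  have near: "blinfun_apply (dual_of (p (Suc k) x)) x \<ge> (1 - 4 * \<beta>) * (\<integral>\<omega>. \<bar>p (Suc k) x \<omega>\<bar> \<partial>M)"
    if "x \<in> A" for k x
  proof -
    have "4 * \<beta> * (1/2) \<le> 4 * \<beta> * (\<integral>\<omega>. \<bar>p (Suc k) x \<omega>\<bar> \<partial>M)"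
      using density(2)[OF that, of "Suc k"] \<beta>(1) by (intro mult_left_mono) auto
    then show ?thesis
      using density(3)[OF that, of "Suc k"] by (simp add: algebra_simps)
  qed
  have pos: "(\<integral>\<omega>. \<bar>p (Suc k) x \<omega>\<bar> \<partial>M) > 0" if "x \<in> A" for k x
    using density(2)[OF that, of "Suc k"] by linarith
  have g_meas: "g m \<in> borel_measurable M" for m
    unfolding g_def using P by (rule borel_measurable_sign_function)
  have g_sum: "(\<Sum>m\<le>N. \<bar>g m \<omega>\<bar>) \<le> 1" for N \<omega>
    unfolding g_def by (rule sum_abs_sign_function_le)
  have sign: "g k \<omega> * p (Suc k) x \<omega> = \<bar>p (Suc k) x \<omega>\<bar>" if "x \<in> A" for k x \<omega>
    unfolding g_def by (rule density(4)[OF that])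
  note c0 = isometric_c0_basis_of_sign_densities[where p = "\<lambda>k x. p (Suc k) x" and \<delta> = "4 * \<beta>",
      OF g_meas g_sum density(1) pos sign orth near \<open>x0 \<in> A\<close> A_sym]
  show ?thesis
    by (rule that[OF c0])
qed

end

theorem lemma4p7:
  fixes M :: "'m measure"
  assumes L1: "dual_isometric_L1 TYPE('a::banach) M"
    and oct: "octahedral TYPE('a)"
    and A_fin: "finite A" and A_sph: "A \<subseteq> sphere (0::'a) 1"
    and eps: "\<epsilon> > 0"
  shows "\<exists>u :: nat \<Rightarrow> (('a \<Rightarrow>\<^sub>L real) \<Rightarrow>\<^sub>L real).
           (\<forall>n. norm (u n) = 1) \<and>
           (\<forall>n (c::nat \<Rightarrow> real). norm (\<Sum>j\<le>n. c j *\<^sub>R u j) = Max ((\<lambda>j. \<bar>c j\<bar>) ` {..n})) \<and>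
           (\<forall>x\<in>A. \<forall>v\<in>closure (span (range u)). norm (canon x + v) > 1 - \<epsilon> + norm v)"
proof -
  obtain T :: "('a \<Rightarrow>\<^sub>L real) \<Rightarrow> 'm \<Rightarrow> real" where "dual_L1 T M"
    using L1 unfolding dual_isometric_L1_def dual_L1_def by blast
  then interpret dual_L1 T M .
  define e where "e = octahedral_vector ({}::'a set) 1"
  have e: "norm e = 1"
    unfolding e_def using oct by (rule octahedral_vector(1)) simp_all
  \<comment> \<open>e keeps A' nonempty even when A is empty\<close>
  define A' where "A' = A \<union> uminus ` A \<union> {e, - e}"
  define \<beta> where "\<beta> = min (\<epsilon> / 8) (1/10)"
  have "finite A'" "A' \<subseteq> sphere 0 1" "e \<in> A'" "\<And>x. x \<in> A' \<Longrightarrow> - x \<in> A'"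
    using A_fin A_sph e by (auto simp: A'_def)
  moreover have "0 < \<beta>" "\<beta> \<le> 1/10" "4 * \<beta> < \<epsilon>"
    using eps by (auto simp: \<beta>_def)
  ultimately obtain u where "isometric_c0_basis u"
    and near: "\<And>x v. x \<in> A' \<Longrightarrow> v \<in> closure (span (range u)) \<Longrightarrow> norm (canon x + v) \<ge> 1 - 4 * \<beta> + norm v"
    using exists_isometric_c0_basis_near[OF oct] by metis
  moreover have "norm (canon x + v) > 1 - \<epsilon> + norm v" if "x \<in> A" "v \<in> closure (span (range u))" for x v
    using near[of x v] that \<open>4 * \<beta> < \<epsilon>\<close> by (force simp: A'_def)
  ultimately show ?thesis
    unfolding isometric_c0_basis_def by blast
qed

end
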